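(* Let $W$ be the affine Weyl group of an irreducible reduced crystallographic root system $\Phi$ of rank 2 (so $W$ is generated by $S=\{s_0,s_1,s_2\}$ and its alcoves are triangles tiling the plane). Let $\alpha\in\Phi$, $c\in\mathbb{Z}$, and let $r_0,r_1,r_2$ be the reflections in the hyperplanes $H_{\alpha,c},H_{\alpha,c+1},H_{\alpha,c+2}$ respectively (three adjacent parallel reflections). Let $x\in W$ be an element whose alcove lies in the closed strip between $H_{r_0}$ and $H_{r_1}$, and suppose $$\ell(r_2r_1x)=\ell(r_1x)+1=\ell(x)+2.$$ Then $\ell(r_0x)=\ell(x)\pm 1$.
   Context: Let $E$ be a Euclidean plane with inner product $\langle\cdot,\cdot\rangle$, $\Phi\subset E$ an irreducible reduced crystallographic root system of rank 2 (type $A_2$, $B_2$ or $G_2$). For $\beta\in\Phi$ put $\beta^\vee=2\beta/\langle\beta,\beta\rangle$; for $k\in\mathbb{Z}$ put $H_{\beta,k}=\{v\in E:\langle v,\beta\rangle=k\}$ and $s_{\beta;k}(v)=v-(\langle v,\beta\rangle-k)\beta^\vee$. The affine Weyl group $W$ is generated by all $s_{\beta;k}$; it is a Coxeter group whose simple generators $s_0,s_1,s_2$ are the reflections in the three walls of the fundamental alcove $A_0$ (the connected component of $E\setminus\bigcup H_{\beta,k}$ containing small positive multiples of the dominant direction, with $0$ in its closure), $s_0$ being the reflection in the wall not containing $0$. Alcoves are the connected components of $E\setminus\bigcup_{\beta,k}H_{\beta,k}$; $W$ acts simply transitively on them and $w\in W$ is identified with the alcove $wA_0$. The reflections of $W$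 (conjugates of simple generators) are exactly the $s_{\beta;k}$, and $H_r$ denotes the hyperplane fixed by a reflection $r$. $\ell$ is the Coxeter length; for a reflection $r$ one has $\ell(rx)>\ell(x)$ iff the alcove $x$ lies on the same side of $H_r$ as $A_0$. *)

theory Defs
  imports "HOL-Analysis.Analysis"
begin

type_synonym pt = "real^2"

definition coroot :: "pt \<Rightarrow> pt" where
  "coroot b = (2 / (b \<bullet> b)) *\<^sub>R b"

definition hyp :: "pt \<Rightarrow> int \<Rightarrow> pt set" where
  "hyp b k = {v. v \<bullet> b = of_int k}"

definition refl :: "pt \<Rightarrow> int \<Rightarrow> pt \<Rightarrow> pt" where
  "refl b k v = v - (v \<bullet> b - of_int k) *\<^sub>R coroot b"

definition root_system :: "pt set \<Rightarrow> bool" where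
  "root_system \<Phi> \<longleftrightarrow>
     finite \<Phi> \<and> 0 \<notin> \<Phi> \<and> span \<Phi> = UNIV \<and>
     (\<forall>a\<in>\<Phi>. \<forall>b\<in>\<Phi>. refl a 0 b \<in> \<Phi>) \<and>
     (\<forall>a\<in>\<Phi>. \<forall>b\<in>\<Phi>. b \<bullet> coroot a \<in> \<int>) \<and>
     (\<forall>a\<in>\<Phi>. \<forall>t::real. t *\<^sub>R a \<in> \<Phi> \<longrightarrow> t = 1 \<or> t = -1) \<and>
     (\<forall>P Q. P \<union> Q = \<Phi> \<and> P \<inter> Q = {} \<and> P \<noteq> {} \<and> Q \<noteq> {}
        \<longrightarrow> (\<exists>a\<in>P. \<exists>b\<in>Q. a \<bullet> b \<noteq> 0))"

definition regular :: "pt set \<Rightarrow> pt set" where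
  "regular \<Phi> = UNIV - (\<Union>b\<in>\<Phi>. \<Union>k. hyp b k)"

definition is_alcove :: "pt set \<Rightarrow> pt set \<Rightarrow> bool" where
  "is_alcove \<Phi> A \<longleftrightarrow> (\<exists>p\<in>regular \<Phi>. A = connected_component_set (regular \<Phi>) p)"

definition refls :: "pt set \<Rightarrow> (pt \<Rightarrow> pt) set" where
  "refls \<Phi> = {refl b k | b k. b \<in> \<Phi>}"

inductive_set affW :: "pt set \<Rightarrow> (pt \<Rightarrow> pt) set" for \<Phi> where
  id: "id \<in> affW \<Phi>"
| step: "r \<in> refls \<Phi> \<Longrightarrow> w \<in> affW \<Phi> \<Longrightarrow> r \<circ> w \<in> affW \<Phi>"

text \<open>Simple reflections: reflections in the walls of the fundamental alcove A0
  (a hyperplane is a wall iff it meets the closure of A0 in at least two points).\<close>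
definition simple_refls :: "pt set \<Rightarrow> pt set \<Rightarrow> (pt \<Rightarrow> pt) set" where
  "simple_refls \<Phi> A0 = {refl b k | b k. b \<in> \<Phi> \<and>
       (\<exists>p q. p \<noteq> q \<and> p \<in> closure A0 \<inter> hyp b k \<and> q \<in> closure A0 \<inter> hyp b k)}"

definition len :: "pt set \<Rightarrow> pt set \<Rightarrow> (pt \<Rightarrow> pt) \<Rightarrow> nat" where
  "len \<Phi> A0 w = (LEAST n. \<exists>ws. length ws = n \<and> set ws \<subseteq> simple_refls \<Phi> A0 \<and>
                                 w = foldr (\<circ>) ws id)"

end

theory Submission
  imports Defs
begin

text \<open>Fix a regular point \<open>p0\<close> of \<open>A0\<close>. For \<open>g \<in> W\<close>, the Coxeter length \<open>\<ell>(g)\<close> is the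
  number of hyperplanes separating \<open>A0\<close> from \<open>g A0\<close>; in terms of the Shi coordinates
  \<open>\<lfloor>v \<bullet> \<beta>\<rfloor>\<close> this reads \<open>2 \<ell>(g) = \<Sum>\<beta>\<in>\<Phi>. \<bar>\<lfloor>g p0 \<bullet> \<beta>\<rfloor> - \<lfloor>p0 \<bullet> \<beta>\<rfloor>\<bar>\<close>.
  Pair every root \<open>\<beta>\<close> with \<open>-s\<^sub>\<alpha>\<beta> = n\<alpha> - \<beta>\<close>, where \<open>n = \<langle>\<beta>,\<alpha>\<^sup>\<or>\<rangle>\<close>.  For a point \<open>a\<close> of the alcove
  \<open>x\<close>, the Shi coordinates of \<open>a\<close>, \<open>r\<^sub>0a\<close>, \<open>r\<^sub>1a\<close> and \<open>r\<^sub>2r\<^sub>1a\<close> along such a pair are determined by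
  four integers, and since \<open>0\<close> lies in the closure of \<open>A0\<close> every Shi coordinate of \<open>p0\<close> is \<open>0\<close> or
  \<open>-1\<close>.  A finite case analysis of the contribution of each pair then shows: if \<open>c \<le> -2\<close>, or
  \<open>c = -1\<close> and \<open>\<alpha>\<close> is positive, the step \<open>x \<mapsto> r\<^sub>1x\<close> cannot increase the length; otherwise every
  pair contributes nonnegatively to \<open>\<ell>(r\<^sub>2r\<^sub>1x) - \<ell>(r\<^sub>1x)\<close>.  As this difference is \<open>1\<close> and the
  pair \<open>{\<alpha>, -\<alpha>}\<close> alone accounts for it, all other pairs contribute \<open>0\<close>, and this forces them
  to contribute \<open>0\<close> to \<open>\<ell>(x) - \<ell>(r\<^sub>0x)\<close> as well, which leaves \<open>\<ell>(x) - \<ell>(r\<^sub>0x) = \<plusminus>1\<close>.\<close>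

section \<open>Reflections in the plane\<close>

definition rot90 :: "pt \<Rightarrow> pt" where "rot90 v = (\<chi> i. if i = 1 then - (v$2) else v$1)"

lemma rot90_nth [simp]: "rot90 v $ 1 = - (v$2)" "rot90 v $ 2 = v$1"
  by (simp_all add: rot90_def)

lemma inner_vec2: "x \<bullet> (y::pt) = x$1*y$1 + x$2*y$2"
  by (simp add: inner_vec_def sum_2)

lemma rot90_orthogonal [simp]: "rot90 v \<bullet> v = 0" "v \<bullet> rot90 v = 0"
  by (simp_all add: inner_vec2)

lemma rot90_inner_rot90 [simp]: "rot90 v \<bullet> rot90 v = v \<bullet> v"
  by (simp add: inner_vec2)

lemma norm_rot90 [simp]: "norm (rot90 b) = norm b"
  by (simp add: norm_eq_sqrt_inner)

lemma vec2_decompose: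
  assumes "b \<noteq> (0::pt)"
  shows "x = ((x \<bullet> b)/(b \<bullet> b)) *\<^sub>R b + ((x \<bullet> rot90 b)/(b \<bullet> b)) *\<^sub>R rot90 b"
proof -
  have bb: "b \<bullet> b \<noteq> 0" using assms by simp
  have "(x \<bullet> b)*b$1 - (x \<bullet> rot90 b)*b$2 = x$1 * (b \<bullet> b)"
    "(x \<bullet> b)*b$2 + (x \<bullet> rot90 b)*b$1 = x$2 * (b \<bullet> b)"
    by (simp_all add: inner_vec2 algebra_simps)
  with bb have "x$1 = ((x \<bullet> b)/(b \<bullet> b)) * b$1 + ((x \<bullet> rot90 b)/(b \<bullet> b)) * (- b$2)"
    "x$2 = ((x \<bullet> b)/(b \<bullet> b)) * b$2 + ((x \<bullet> rot90 b)/(b \<bullet> b)) * b$1"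
    by (simp_all add: field_simps)
  then show ?thesis
    unfolding vec_eq_iff forall_2 by simp
qed

lemma parallel_if_orthogonal_rot90:
  assumes "b \<noteq> (0::pt)" "x \<bullet> rot90 b = 0"
  shows "x = ((x \<bullet> b)/(b \<bullet> b)) *\<^sub>R b"
  using vec2_decompose[OF assms(1), of x] assms(2) by simp

lemma rot90_parallel_if_orthogonal:
  assumes "b \<noteq> (0::pt)" "x \<bullet> b = 0"
  shows "x = ((x \<bullet> rot90 b)/(b \<bullet> b)) *\<^sub>R rot90 b"
  using vec2_decompose[OF assms(1), of x] assms(2) by simp

lemma coroot_inner_root: "b \<noteq> 0 \<Longrightarrow> coroot b \<bullet> b = 2"
  by (simp add: coroot_def)

lemma coroot_uminus: "coroot (-b) = - coroot b"
  by (simp add: coroot_def)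

lemma refl_expand: "refl b k v = v - (v \<bullet> b) *\<^sub>R coroot b + of_int k *\<^sub>R coroot b"
  by (simp add: refl_def algebra_simps)

lemma refl_inner_root: "b \<noteq> 0 \<Longrightarrow> refl b k v \<bullet> b = 2 * of_int k - v \<bullet> b"
  by (simp add: refl_def inner_diff_left coroot_inner_root algebra_simps)

lemma refl_refl: "b \<noteq> 0 \<Longrightarrow> refl b k (refl b k v) = v"
  by (simp add: refl_def [of b k "refl b k v"] refl_inner_root) (simp add: refl_def algebra_simps)

lemma refl_uminus: "refl (-b) (-k) = refl b k"
  by (rule ext) (simp add: refl_def coroot_uminus algebra_simps)

lemma refl_fixes_hyp: "w \<bullet> b = of_int k \<Longrightarrow> refl b k w = w"
  by (simp add: refl_def)

lemma refl_hyp_add_scaleR: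
  assumes "b \<noteq> 0" "w \<bullet> b = of_int k"
  shows "refl b k (w + \<epsilon> *\<^sub>R b) = w - \<epsilon> *\<^sub>R b"
proof -
  have "refl b k (w + \<epsilon> *\<^sub>R b) = w + \<epsilon> *\<^sub>R b - (\<epsilon> * (b \<bullet> b)) *\<^sub>R ((2 / (b \<bullet> b)) *\<^sub>R b)"
    using assms(2) by (simp add: refl_def coroot_def inner_add_left)
  also have "(\<epsilon> * (b \<bullet> b)) *\<^sub>R ((2 / (b \<bullet> b)) *\<^sub>R b) = \<epsilon> *\<^sub>R b + \<epsilon> *\<^sub>R b"
    using assms(1) by (simp add: scaleR_add_left [symmetric])
  finally show ?thesis by simp
qed

lemma refl0_uminus: "refl b 0 (- x) = - refl b 0 x"
  by (simp add: refl_def)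

lemma refl0_root_self: "b \<noteq> 0 \<Longrightarrow> refl b 0 b = - b"
  by (simp add: refl_def coroot_def scaleR_2 [symmetric] algebra_simps)

lemma orthogonal_transformation_refl0:
  assumes "b \<noteq> 0" shows "orthogonal_transformation (refl b 0)"
proof -
  have "linear (refl b 0)"
    by (rule linearI) (simp_all add: refl_def inner_add_left algebra_simps)
  moreover have "refl b 0 u \<bullet> refl b 0 v = u \<bullet> v" for u v
    using assms unfolding refl_def coroot_def
    by (simp add: inner_diff_left inner_diff_right algebra_simps inner_commute)
  ultimately show ?thesis by (simp add: orthogonal_transformation_def)
qed

section \<open>Affine symmetries of a root system\<close>

lemma refls_affW: "r \<in> refls \<Phi> \<Longrightarrow> r \<in> affW \<Phi>"
  using affW.step[OF _ affW.id, of r \<Phi>] by simp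

lemma affW_comp: "g \<in> affW \<Phi> \<Longrightarrow> h \<in> affW \<Phi> \<Longrightarrow> g \<circ> h \<in> affW \<Phi>"
  by (induction rule: affW.induct) (auto simp: comp_assoc intro: affW.step)

locale root_sys =
  fixes \<Phi> :: "pt set"
  assumes root_system: "root_system \<Phi>"
begin

lemma finite_roots: "finite \<Phi>"
  using root_system by (simp add: root_system_def)

lemma root_nonzero: "b \<in> \<Phi> \<Longrightarrow> b \<noteq> 0"
  using root_system by (auto simp: root_system_def)

lemma refl0_root_closed: "a \<in> \<Phi> \<Longrightarrow> b \<in> \<Phi> \<Longrightarrow> refl a 0 b \<in> \<Phi>"
  using root_system by (simp add: root_system_def)

lemma cartan_Ints: "a \<in> \<Phi> \<Longrightarrow> b \<in> \<Phi> \<Longrightarrow> b \<bullet> coroot a \<in> \<int>"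
  using root_system by (simp add: root_system_def)

lemma reduced_roots: "a \<in> \<Phi> \<Longrightarrow> t *\<^sub>R a \<in> \<Phi> \<Longrightarrow> t = 1 \<or> t = -1"
  using root_system by (simp add: root_system_def)

lemma uminus_root: "b \<in> \<Phi> \<Longrightarrow> - b \<in> \<Phi>"
  using refl0_root_closed[of b b] refl0_root_self[OF root_nonzero[of b]] by simp

lemma refl0_image_roots: "b \<in> \<Phi> \<Longrightarrow> refl b 0 ` \<Phi> = \<Phi>"
  using refl0_root_closed refl_refl[OF root_nonzero] by (metis image_subsetI subset_antisym subsetI rev_image_eqI)

lemma parallel_roots:
  assumes "b \<in> \<Phi>" "\<beta> \<in> \<Phi>" "\<beta> \<bullet> rot90 b = 0"
  shows "\<beta> = b \<or> \<beta> = - b"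
proof -
  have "\<beta> = ((\<beta> \<bullet> b)/(b \<bullet> b)) *\<^sub>R b"
    using parallel_if_orthogonal_rot90[OF root_nonzero[OF assms(1)] assms(3)] .
  moreover from this have "(\<beta> \<bullet> b)/(b \<bullet> b) = 1 \<or> (\<beta> \<bullet> b)/(b \<bullet> b) = -1"
    using reduced_roots[OF assms(1)] assms(2) by metis
  ultimately show ?thesis by (metis scaleR_minus1_left scaleR_one)
qed

lemma cartan_of_int_floor: "a \<in> \<Phi> \<Longrightarrow> b \<in> \<Phi> \<Longrightarrow> of_int \<lfloor>b \<bullet> coroot a\<rfloor> = b \<bullet> coroot a"
  using cartan_Ints by simp

definition aff_sym :: "(pt \<Rightarrow> pt) \<Rightarrow> (pt \<Rightarrow> pt) \<Rightarrow> pt \<Rightarrow> bool" where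
  "aff_sym g L \<tau> \<longleftrightarrow> orthogonal_transformation L \<and> L ` \<Phi> = \<Phi> \<and> (\<forall>b\<in>\<Phi>. \<tau> \<bullet> b \<in> \<int>) \<and>
     g = (\<lambda>v. L v + \<tau>)"

lemma aff_sym_id: "aff_sym id id 0"
  by (simp add: aff_sym_def id_def fun_eq_iff)

lemma aff_sym_refl:
  assumes "b \<in> \<Phi>"
  shows "aff_sym (refl b k) (refl b 0) (of_int k *\<^sub>R coroot b)"
  using assms cartan_Ints[OF assms] orthogonal_transformation_refl0[OF root_nonzero[OF assms]]
    refl0_image_roots[OF assms]
  by (auto simp: aff_sym_def inner_commute refl_expand fun_eq_iff)

lemma aff_sym_comp:
  assumes "aff_sym g L \<tau>" "aff_sym h M \<sigma>"
  shows "aff_sym (g \<circ> h) (L \<circ> M) (L \<sigma> + \<tau>)"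
proof -
  have L: "orthogonal_transformation L" "L ` \<Phi> = \<Phi>" "\<forall>b\<in>\<Phi>. \<tau> \<bullet> b \<in> \<int>" "g = (\<lambda>v. L v + \<tau>)"
    using assms(1) by (auto simp: aff_sym_def)
  have M: "orthogonal_transformation M" "M ` \<Phi> = \<Phi>" "\<forall>b\<in>\<Phi>. \<sigma> \<bullet> b \<in> \<int>" "h = (\<lambda>v. M v + \<sigma>)"
    using assms(2) by (auto simp: aff_sym_def)
  have "g \<circ> h = (\<lambda>v. (L \<circ> M) v + (L \<sigma> + \<tau>))"
    using L(1,4) M(4) by (auto simp: orthogonal_transformation_def linear_add)
  moreover have "(L \<sigma> + \<tau>) \<bullet> b \<in> \<int>" if "b \<in> \<Phi>" for b
  proof -
    obtain c where "c \<in> \<Phi>" "b = L c" using L(2) \<open>b \<in> \<Phi>\<close> by auto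
    then show ?thesis
      using L(1,3) M(3) \<open>b \<in> \<Phi>\<close> by (simp add: orthogonal_transformation_def inner_add_left)
  qed
  moreover have "(L \<circ> M) ` \<Phi> = \<Phi>"
    using L(2) M(2) by (metis image_comp)
  ultimately show ?thesis
    using L(1) M(1) by (simp add: aff_sym_def orthogonal_transformation_compose)
qed

lemma affW_aff_sym: "g \<in> affW \<Phi> \<Longrightarrow> \<exists>L \<tau>. aff_sym g L \<tau>"
proof (induction rule: affW.induct)
  case id
  then show ?case using aff_sym_id by blast
next
  case (step r w)
  then obtain b k where "b \<in> \<Phi>" "r = refl b k" by (auto simp: refls_def)
  with step.IH show ?case using aff_sym_comp[OF aff_sym_refl] by blast
qed

lemma aff_sym_root: "aff_sym g L \<tau> \<Longrightarrow> \<beta> \<in> \<Phi> \<Longrightarrow> L \<beta> \<in> \<Phi>"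
  unfolding aff_sym_def by auto

lemma aff_sym_translation_Ints:
  "aff_sym g L \<tau> \<Longrightarrow> \<beta> \<in> \<Phi> \<Longrightarrow> \<tau> \<bullet> L \<beta> = of_int \<lfloor>\<tau> \<bullet> L \<beta>\<rfloor>"
  using aff_sym_root by (metis aff_sym_def of_int_floor)

lemma aff_sym_inner: "aff_sym g L \<tau> \<Longrightarrow> g v \<bullet> L \<beta> = v \<bullet> \<beta> + \<tau> \<bullet> L \<beta>"
  unfolding aff_sym_def orthogonal_transformation_def by (simp add: inner_add_left)

lemma aff_sym_dist: "aff_sym g L \<tau> \<Longrightarrow> dist (g u) (g v) = dist u v"
  by (auto simp: aff_sym_def dist_norm orthogonal_transformation_norm orthogonal_transformation_linear
      linear_diff [symmetric])

lemma aff_sym_inj_on_roots: "aff_sym g L \<tau> \<Longrightarrow> inj_on L \<Phi>"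
  unfolding aff_sym_def using orthogonal_transformation_inj inj_on_subset by blast

lemma aff_sym_conj_refl:
  assumes r: "aff_sym g L \<tau>" and b: "b \<in> \<Phi>"
  shows "g \<circ> refl b k = refl (L b) (k + \<lfloor>\<tau> \<bullet> L b\<rfloor>) \<circ> g"
proof
  fix v
  have L: "linear L" "\<forall>u v. L u \<bullet> L v = u \<bullet> v" and g: "g = (\<lambda>v. L v + \<tau>)"
    using r by (auto simp: aff_sym_def orthogonal_transformation_def)
  have Lc: "L (coroot b) = coroot (L b)"
    unfolding coroot_def using L by (simp add: linear_cmul)
  have "(g \<circ> refl b k) v = L v - (v \<bullet> b - of_int k) *\<^sub>R L (coroot b) + \<tau>"
    using g L(1) by (simp add: refl_def linear_diff linear_cmul)
  also have "\<dots> = g v - (g v \<bullet> L b - of_int (k + \<lfloor>\<tau> \<bullet> L b\<rfloor>)) *\<^sub>R coroot (L b)"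
    using Lc aff_sym_inner[OF r, of v b] aff_sym_translation_Ints[OF r b] g by simp
  finally show "(g \<circ> refl b k) v = (refl (L b) (k + \<lfloor>\<tau> \<bullet> L b\<rfloor>) \<circ> g) v"
    by (simp add: refl_def)
qed

end

section \<open>Alcoves and Shi coordinates\<close>

definition shi :: "pt \<Rightarrow> pt \<Rightarrow> int" where "shi \<beta> v = \<lfloor>v \<bullet> \<beta>\<rfloor>"

context root_sys
begin

lemma regular_iff: "v \<in> regular \<Phi> \<longleftrightarrow> (\<forall>\<beta>\<in>\<Phi>. \<forall>k::int. v \<bullet> \<beta> \<noteq> of_int k)"
  by (auto simp: regular_def hyp_def)

lemma regular_strict_strip:
  assumes "v \<in> regular \<Phi>" "\<alpha> \<in> \<Phi>" "of_int c \<le> v \<bullet> \<alpha>" "v \<bullet> \<alpha> \<le> of_int c + 1"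
  shows "of_int c < v \<bullet> \<alpha>" "v \<bullet> \<alpha> < of_int c + 1"
proof -
  have "v \<bullet> \<alpha> \<noteq> of_int c" "v \<bullet> \<alpha> \<noteq> of_int (c + 1)" using assms(1,2) unfolding regular_iff by blast+
  then show "of_int c < v \<bullet> \<alpha>" "v \<bullet> \<alpha> < of_int c + 1" using assms(3,4) by simp_all
qed

lemma shi_strict:
  "v \<in> regular \<Phi> \<Longrightarrow> \<beta> \<in> \<Phi> \<Longrightarrow> of_int (shi \<beta> v) < v \<bullet> \<beta> \<and> v \<bullet> \<beta> < of_int (shi \<beta> v) + 1"
  unfolding shi_def regular_iff
  using of_int_floor_le[of "v \<bullet> \<beta>"] real_of_int_floor_add_one_gt[of "v \<bullet> \<beta>"]
  by (metis order_le_less)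

lemma shi_uminus: "v \<in> regular \<Phi> \<Longrightarrow> \<beta> \<in> \<Phi> \<Longrightarrow> shi (-\<beta>) v = - shi \<beta> v - 1"
  using shi_strict[of v \<beta>] unfolding shi_def floor_eq_iff by simp linarith

lemma shi_aff_sym:
  assumes "aff_sym g L \<tau>" "\<beta> \<in> \<Phi>"
  shows "shi (L \<beta>) (g v) = shi \<beta> v + \<lfloor>\<tau> \<bullet> L \<beta>\<rfloor>"
proof -
  have "g v \<bullet> L \<beta> = v \<bullet> \<beta> + of_int \<lfloor>\<tau> \<bullet> L \<beta>\<rfloor>"
    using aff_sym_inner[OF assms(1)] aff_sym_translation_Ints[OF assms] by simp
  then show ?thesis unfolding shi_def by simp
qed

lemma aff_sym_regular:
  assumes r: "aff_sym g L \<tau>" and v: "v \<in> regular \<Phi>"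
  shows "g v \<in> regular \<Phi>"
  unfolding regular_iff
proof (intro ballI allI notI)
  fix \<gamma> k assume "\<gamma> \<in> \<Phi>" and e: "g v \<bullet> \<gamma> = of_int k"
  then obtain \<beta> where b: "\<beta> \<in> \<Phi>" "\<gamma> = L \<beta>" using r by (auto simp: aff_sym_def)
  have "g v \<bullet> L \<beta> = v \<bullet> \<beta> + of_int \<lfloor>\<tau> \<bullet> L \<beta>\<rfloor>"
    using aff_sym_inner[OF r] aff_sym_translation_Ints[OF r b(1)] by simp
  then have "v \<bullet> \<beta> = of_int (k - \<lfloor>\<tau> \<bullet> L \<beta>\<rfloor>)" using e b by simp
  then show False using v b(1) unfolding regular_iff by blast
qed

lemma affW_regular: "g \<in> affW \<Phi> \<Longrightarrow> v \<in> regular \<Phi> \<Longrightarrow> g v \<in> regular \<Phi>"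
  using affW_aff_sym aff_sym_regular by blast

lemma regular_if_between:
  "(\<forall>\<beta>\<in>\<Phi>. \<exists>m::int. of_int m < v \<bullet> \<beta> \<and> v \<bullet> \<beta> < of_int m + 1) \<Longrightarrow> v \<in> regular \<Phi>"
  unfolding regular_iff by (metis of_int_less_iff of_int_add of_int_1 not_less zless_imp_add1_zle)

definition alcove :: "pt \<Rightarrow> pt set" where
  "alcove p = {v. \<forall>\<beta>\<in>\<Phi>. of_int (shi \<beta> p) < v \<bullet> \<beta>}"

lemma alcove_bounds:
  assumes "p \<in> regular \<Phi>" "v \<in> alcove p" "\<beta> \<in> \<Phi>"
  shows "of_int (shi \<beta> p) < v \<bullet> \<beta>" "v \<bullet> \<beta> < of_int (shi \<beta> p) + 1"
proof -
  show "of_int (shi \<beta> p) < v \<bullet> \<beta>" using assms(2,3) by (simp add: alcove_def)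
  have "of_int (shi (-\<beta>) p) < v \<bullet> (-\<beta>)"
    using assms(2) uminus_root[OF assms(3)] by (simp add: alcove_def del: inner_minus_right)
  then show "v \<bullet> \<beta> < of_int (shi \<beta> p) + 1" using shi_uminus[OF assms(1,3)] by simp
qed

lemma shi_alcove: "p \<in> regular \<Phi> \<Longrightarrow> v \<in> alcove p \<Longrightarrow> \<beta> \<in> \<Phi> \<Longrightarrow> shi \<beta> v = shi \<beta> p"
  using alcove_bounds[of p v \<beta>] by (simp add: shi_def [of \<beta> v] floor_eq_iff)

lemma alcove_regular: "p \<in> regular \<Phi> \<Longrightarrow> v \<in> alcove p \<Longrightarrow> v \<in> regular \<Phi>"
  using alcove_bounds by (blast intro: regular_if_between)

lemma same_shi_in_alcove:
  assumes "p \<in> regular \<Phi>" "\<forall>\<beta>\<in>\<Phi>. shi \<beta> v = shi \<beta> p"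
  shows "v \<in> alcove p"
  unfolding alcove_def
proof (intro CollectI ballI)
  fix \<beta> assume b: "\<beta> \<in> \<Phi>"
  have "shi (-\<beta>) v = - shi \<beta> p - 1"
    using assms(2) uminus_root[OF b] shi_uminus[OF assms(1) b] by simp
  then have "v \<bullet> \<beta> \<noteq> of_int (shi \<beta> p)" unfolding shi_def by auto
  moreover have "of_int (shi \<beta> p) \<le> v \<bullet> \<beta>" using assms(2) b unfolding shi_def by (metis of_int_floor_le)
  ultimately show "of_int (shi \<beta> p) < v \<bullet> \<beta>" by simp
qed

lemma regular_if_same_shi: "p \<in> regular \<Phi> \<Longrightarrow> \<forall>\<beta>\<in>\<Phi>. shi \<beta> v = shi \<beta> p \<Longrightarrow> v \<in> regular \<Phi>"
  using same_shi_in_alcove alcove_regular by blast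

lemma alcove_self: "p \<in> regular \<Phi> \<Longrightarrow> p \<in> alcove p"
  using same_shi_in_alcove by blast

lemma alcove_Inter: "alcove p = (\<Inter>\<beta>\<in>\<Phi>. {v. of_int (shi \<beta> p) < \<beta> \<bullet> v})"
  by (auto simp: alcove_def inner_commute)

lemma open_alcove: "open (alcove p)"
  unfolding alcove_Inter using finite_roots by (intro open_INT) (auto intro: open_halfspace_gt)

lemma convex_alcove: "convex (alcove p)"
  unfolding alcove_Inter by (intro convex_INT) (auto intro: convex_halfspace_gt)

lemma closure_alcove_shi_le:
  assumes "v \<in> closure (alcove p)" "\<beta> \<in> \<Phi>"
  shows "of_int (shi \<beta> p) \<le> v \<bullet> \<beta>"
proof -
  have "closure (alcove p) \<subseteq> {v. of_int (shi \<beta> p) \<le> \<beta> \<bullet> v}"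
  proof (rule closure_minimal)
    show "alcove p \<subseteq> {v. of_int (shi \<beta> p) \<le> \<beta> \<bullet> v}"
      using assms(2) by (auto simp: alcove_def inner_commute less_imp_le)
  qed (rule closed_halfspace_ge)
  then show ?thesis using assms(1) by (auto simp: inner_commute)
qed

lemma connected_component_regular_eq_alcove:
  assumes p: "p \<in> regular \<Phi>"
  shows "connected_component_set (regular \<Phi>) p = alcove p"
proof
  show "alcove p \<subseteq> connected_component_set (regular \<Phi>) p"
    using p by (intro connected_component_maximal)
      (auto simp: alcove_self convex_connected[OF convex_alcove] intro: alcove_regular)
  let ?C = "connected_component_set (regular \<Phi>) p"
  let ?U = "\<Union>\<beta>\<in>\<Phi>. {v. \<beta> \<bullet> v < of_int (shi \<beta> p)}"
  have "?C \<subseteq> alcove p \<union> ?U"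
  proof
    fix v assume v: "v \<in> ?C"
    then have rv: "v \<in> regular \<Phi>" using connected_component_subset by blast
    show "v \<in> alcove p \<union> ?U"
    proof (cases "v \<in> alcove p")
      case False
      then obtain \<beta> where b: "\<beta> \<in> \<Phi>" "\<not> of_int (shi \<beta> p) < v \<bullet> \<beta>"
        by (auto simp: alcove_def)
      moreover have "v \<bullet> \<beta> \<noteq> of_int (shi \<beta> p)" using rv b(1) by (simp add: regular_iff)
      ultimately have "\<beta> \<bullet> v < of_int (shi \<beta> p)" by (simp add: inner_commute)
      then show ?thesis using b(1) by blast
    qed simp
  qed
  moreover have "alcove p \<inter> ?C \<noteq> {}"
    using p alcove_self by (auto intro: connected_component_refl)
  moreover have "alcove p \<inter> ?U \<inter> ?C = {}" by (auto simp: alcove_def inner_commute)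
  moreover have "open ?U" by (intro open_UN) (auto intro: open_halfspace_lt)
  ultimately have "?U \<inter> ?C = {}"
    using connectedD[OF connected_connected_component open_alcove] by blast
  then show "?C \<subseteq> alcove p" using \<open>?C \<subseteq> alcove p \<union> ?U\<close> by blast
qed

text \<open>Twice the number of hyperplanes \<open>H\<^sub>\<beta>\<^sub>,\<^sub>k\<close> separating two regular points: every hyperplane is
  counted once for \<open>\<beta>\<close> and once for \<open>-\<beta>\<close>.\<close>

definition shi_dist :: "pt \<Rightarrow> pt \<Rightarrow> int" where
  "shi_dist p q = (\<Sum>\<beta>\<in>\<Phi>. \<bar>shi \<beta> p - shi \<beta> q\<bar>)"

lemma shi_dist_nonneg: "0 \<le> shi_dist p q"
  unfolding shi_dist_def by (simp add: sum_nonneg)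

lemma shi_dist_aff_sym:
  assumes r: "aff_sym g L \<tau>"
  shows "shi_dist (g p) (g q) = shi_dist p q"
proof -
  have "shi_dist (g p) (g q) = (\<Sum>\<gamma>\<in>L ` \<Phi>. \<bar>shi \<gamma> (g p) - shi \<gamma> (g q)\<bar>)"
    using r by (simp add: shi_dist_def aff_sym_def)
  also have "\<dots> = (\<Sum>\<beta>\<in>\<Phi>. \<bar>shi (L \<beta>) (g p) - shi (L \<beta>) (g q)\<bar>)"
    by (simp add: sum.reindex[OF aff_sym_inj_on_roots[OF r]])
  also have "\<dots> = shi_dist p q"
    unfolding shi_dist_def by (intro sum.cong) (auto simp: shi_aff_sym[OF r])
  finally show ?thesis .
qed

lemma same_shi_aff_sym:
  assumes r: "aff_sym g L \<tau>" and e: "\<forall>\<beta>\<in>\<Phi>. shi \<beta> p = shi \<beta> q"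
  shows "\<forall>\<beta>\<in>\<Phi>. shi \<beta> (g p) = shi \<beta> (g q)"
proof
  fix \<gamma> assume "\<gamma> \<in> \<Phi>"
  then obtain \<beta> where "\<beta> \<in> \<Phi>" "\<gamma> = L \<beta>" using r by (auto simp: aff_sym_def)
  then show "shi \<gamma> (g p) = shi \<gamma> (g q)" using e shi_aff_sym[OF r] by simp
qed

lemma sum_roots_split:
  assumes b: "b \<in> \<Phi>"
  shows "(\<Sum>\<beta>\<in>\<Phi>. f \<beta>) = f b + f (-b) + (\<Sum>\<beta>\<in>\<Phi> - {b} - {-b}. f \<beta>)"
proof -
  have "-b \<noteq> b" using root_nonzero[OF b] by (metis inner_minus_left inner_eq_zero_iff neg_equal_zero)
  have "(\<Sum>\<beta>\<in>\<Phi>. f \<beta>) = f b + (\<Sum>\<beta>\<in>\<Phi> - {b}. f \<beta>)"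
    using finite_roots b by (simp add: sum.remove)
  also have "(\<Sum>\<beta>\<in>\<Phi> - {b}. f \<beta>) = f (-b) + (\<Sum>\<beta>\<in>\<Phi> - {b} - {-b}. f \<beta>)"
    using finite_roots uminus_root[OF b] \<open>-b \<noteq> b\<close> by (intro sum.remove) auto
  finally show ?thesis by (simp add: add.assoc)
qed

end

section \<open>Walls of an alcove\<close>

lemma in_closure_if_ray_in:
  fixes x d :: "'a::real_normed_vector"
  assumes "0 < \<delta>" "\<And>t. 0 < t \<Longrightarrow> t < \<delta> \<Longrightarrow> x + t *\<^sub>R d \<in> S"
  shows "x \<in> closure S"
  unfolding closure_approachable
proof (intro allI impI)
  fix e :: real assume "0 < e"
  define t where "t = min (\<delta> / 2) (e / (2 * (norm d + 1)))"
  have "0 < norm d + 1" by (metis norm_ge_zero add_nonneg_pos zero_less_one)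
  then have t: "0 < t" "t < \<delta>" using assms(1) \<open>0 < e\<close> by (auto simp: t_def)
  have "t * norm d \<le> e / (2 * (norm d + 1)) * (norm d + 1)"
    using t by (intro mult_mono) (auto simp: t_def)
  also have "\<dots> = e / 2" using \<open>0 < norm d + 1\<close> by (simp add: field_simps)
  also have "\<dots> < e" using \<open>0 < e\<close> by simp
  finally show "\<exists>y\<in>S. dist y x < e"
    using assms(2)[OF t] t(1) by (intro bexI[of _ "x + t *\<^sub>R d"]) (auto simp: dist_norm)
qed

lemma exists_shift_off_hyperplane:
  fixes u w e b :: "'a::real_inner"
  assumes "dist u w < \<rho>" "e \<bullet> b \<noteq> 0"
  obtains t where "dist (u + t *\<^sub>R e) w < \<rho>" "(u + t *\<^sub>R e) \<bullet> b \<noteq> c"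
proof (cases "u \<bullet> b = c")
  case True
  define t where "t = (\<rho> - dist u w) / (2 * (norm e + 1))"
  have "0 < norm e + 1" by (metis norm_ge_zero add_nonneg_pos zero_less_one)
  then have t: "0 < t" using assms(1) by (simp add: t_def)
  have "t * norm e \<le> t * (norm e + 1)" using t by simp
  also have "\<dots> = (\<rho> - dist u w) / 2" using \<open>0 < norm e + 1\<close> by (simp add: t_def field_simps)
  also have "\<dots> < \<rho> - dist u w" using assms(1) by simp
  finally have "dist (u + t *\<^sub>R e) w < \<rho>"
    using dist_triangle[of "u + t *\<^sub>R e" w u] t by (simp add: dist_norm)
  moreover have "(u + t *\<^sub>R e) \<bullet> b \<noteq> c" using True t assms(2) by (simp add: inner_add_left)
  ultimately show ?thesis using that by blast
next
  case False
  then show ?thesis using that[of 0] assms(1) by simp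
qed

lemma int_between_if_floor_neq:
  fixes x1 x2 :: real
  assumes "\<lfloor>x1\<rfloor> \<noteq> \<lfloor>x2\<rfloor>"
  shows "\<exists>j::int. min x1 x2 < of_int j \<and> of_int j \<le> max x1 x2"
proof (cases "x1 \<le> x2")
  case True
  then have "\<lfloor>x1\<rfloor> < \<lfloor>x2\<rfloor>" using assms floor_mono[OF True] by linarith
  then have "x1 < of_int \<lfloor>x2\<rfloor>" by (meson floor_less_iff)
  then show ?thesis using True by (intro exI[of _ "\<lfloor>x2\<rfloor>"]) auto
next
  case False
  then have "\<lfloor>x2\<rfloor> < \<lfloor>x1\<rfloor>" using assms floor_mono[of x2 x1] by linarith
  then have "x2 < of_int \<lfloor>x1\<rfloor>" by (meson floor_less_iff)
  then show ?thesis using False by (intro exI[of _ "\<lfloor>x1\<rfloor>"]) auto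
qed

context root_sys
begin

text \<open>\<open>wall_point p b k w \<rho>\<close> says that \<open>H\<^sub>b\<^sub>,\<^sub>k\<close> is a wall of the alcove of \<open>p\<close>, which lies on its
  positive side, with \<open>w\<close> in the relative interior of that wall.\<close>

definition wall_point :: "pt \<Rightarrow> pt \<Rightarrow> int \<Rightarrow> pt \<Rightarrow> real \<Rightarrow> bool" where
  "wall_point p b k w \<rho> \<longleftrightarrow> b \<in> \<Phi> \<and> w \<bullet> b = of_int k \<and> 0 < \<rho> \<and>
     (\<forall>v. dist v w < \<rho> \<longrightarrow> of_int k < v \<bullet> b \<longrightarrow> (\<forall>\<beta>\<in>\<Phi>. shi \<beta> v = shi \<beta> p))"

lemma wall_point_cong:
  "wall_point p b k w \<rho> \<Longrightarrow> \<forall>\<beta>\<in>\<Phi>. shi \<beta> p = shi \<beta> p' \<Longrightarrow> wall_point p' b k w \<rho>"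
  unfolding wall_point_def by simp

lemma wall_point_eps:
  assumes "wall_point p b k w \<rho>"
  obtains \<epsilon> where "0 < \<epsilon>" "\<epsilon> * norm b < \<rho>" "\<epsilon> * (b \<bullet> b) < 1"
proof
  have "b \<in> \<Phi>" and \<rho>: "0 < \<rho>" using assms by (auto simp: wall_point_def)
  then have nb: "0 < norm b" "0 < b \<bullet> b" using root_nonzero by auto
  define \<epsilon> where "\<epsilon> = min (\<rho> / (2 * norm b)) (1 / (2 * (b \<bullet> b)))"
  show "0 < \<epsilon>" using \<rho> nb by (simp add: \<epsilon>_def)
  have "\<epsilon> * norm b \<le> \<rho> / (2 * norm b) * norm b" using nb by (intro mult_right_mono) (auto simp: \<epsilon>_def)
  then show "\<epsilon> * norm b < \<rho>" using nb \<rho> by simp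
  have "\<epsilon> * (b \<bullet> b) \<le> 1 / (2 * (b \<bullet> b)) * (b \<bullet> b)" using nb by (intro mult_right_mono) (auto simp: \<epsilon>_def)
  then show "\<epsilon> * (b \<bullet> b) < 1" using nb by simp
qed

lemma wall_point_shi:
  assumes r: "p \<in> regular \<Phi>" and W: "wall_point p b k w \<rho>"
  shows "shi b p = k" "of_int k < p \<bullet> b"
proof -
  obtain \<epsilon> where e: "0 < \<epsilon>" "\<epsilon> * norm b < \<rho>" "\<epsilon> * (b \<bullet> b) < 1" using wall_point_eps[OF W] .
  have b: "b \<in> \<Phi>" "w \<bullet> b = of_int k" using W by (auto simp: wall_point_def)
  let ?v = "w + \<epsilon> *\<^sub>R b"
  have vb: "?v \<bullet> b = of_int k + \<epsilon> * (b \<bullet> b)" and bb: "0 < b \<bullet> b"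
    using b root_nonzero[OF b(1)] by (simp_all add: inner_add_left)
  have "dist ?v w < \<rho>" "of_int k < ?v \<bullet> b" using e vb bb by (simp_all add: dist_norm)
  then have "shi b p = shi b ?v" using W b(1) by (auto simp: wall_point_def)
  also have "shi b ?v = k" unfolding shi_def floor_eq_iff using vb e bb by simp
  finally show "shi b p = k" .
  then show "of_int k < p \<bullet> b" using shi_strict[OF r b(1)] by simp
qed

lemma wall_point_ball_regular:
  assumes r: "p \<in> regular \<Phi>" and W: "wall_point p b k w \<rho>" and v: "dist v w < \<rho>" "v \<bullet> b \<noteq> of_int k"
  shows "v \<in> regular \<Phi>"
proof -
  have b: "b \<in> \<Phi>" "w \<bullet> b = of_int k" using W by (auto simp: wall_point_def)
  have positive_side: "u \<in> regular \<Phi>" if "dist u w < \<rho>" "of_int k < u \<bullet> b" for u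
    using that W regular_if_same_shi[OF r] by (auto simp: wall_point_def)
  show ?thesis
  proof (cases "of_int k < v \<bullet> b")
    case False
    let ?s = "refl b k"
    have s: "aff_sym ?s (refl b 0) (of_int k *\<^sub>R coroot b)" using aff_sym_refl[OF b(1)] .
    have "dist (?s v) w = dist v w"
      using aff_sym_dist[OF s, of v w] refl_fixes_hyp[OF b(2)] by simp
    moreover have "of_int k < ?s v \<bullet> b"
      using False v(2) refl_inner_root[OF root_nonzero[OF b(1)]] by simp
    ultimately have "?s v \<in> regular \<Phi>" using positive_side v(1) by simp
    then show ?thesis using aff_sym_regular[OF s] refl_refl[OF root_nonzero[OF b(1)]] by metis
  qed (use positive_side v in blast)
qed

lemma wall_point_only_hyperplane:
  assumes r: "p \<in> regular \<Phi>" and W: "wall_point p b k w \<rho>" and u: "dist u w < \<rho>"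
    and \<beta>: "\<beta> \<in> \<Phi>" "u \<bullet> \<beta> = of_int j"
  shows "\<beta> = b \<or> \<beta> = - b"
proof (rule ccontr)
  assume nb: "\<not> (\<beta> = b \<or> \<beta> = - b)"
  have b: "b \<in> \<Phi>" using W by (simp add: wall_point_def)
  have "rot90 \<beta> \<bullet> b \<noteq> 0"
    using parallel_roots[OF \<beta>(1) b] nb by (auto simp: inner_commute)
  then obtain t where t: "dist (u + t *\<^sub>R rot90 \<beta>) w < \<rho>" "(u + t *\<^sub>R rot90 \<beta>) \<bullet> b \<noteq> of_int k"
    using exists_shift_off_hyperplane[OF u] by blast
  have "(u + t *\<^sub>R rot90 \<beta>) \<bullet> \<beta> = of_int j" using \<beta>(2) by (simp add: inner_add_left)
  moreover have "u + t *\<^sub>R rot90 \<beta> \<in> regular \<Phi>" using wall_point_ball_regular[OF r W t] .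
  ultimately show False using \<beta>(1) by (auto simp: regular_iff)
qed

lemma shi_across_wall_point:
  assumes r: "p \<in> regular \<Phi>" and W: "wall_point p b k w \<rho>" and e: "0 < \<epsilon>" "\<epsilon> * norm b < \<rho>"
    and \<beta>: "\<beta> \<in> \<Phi>" "\<beta> \<noteq> b" "\<beta> \<noteq> - b"
  shows "shi \<beta> (w - \<epsilon> *\<^sub>R b) = shi \<beta> (w + \<epsilon> *\<^sub>R b)"
proof (rule ccontr)
  let ?c = "b \<bullet> \<beta>" and ?a = "w \<bullet> \<beta>"
  assume "shi \<beta> (w - \<epsilon> *\<^sub>R b) \<noteq> shi \<beta> (w + \<epsilon> *\<^sub>R b)"
  then obtain j :: int where j: "min (?a - \<epsilon> * ?c) (?a + \<epsilon> * ?c) < of_int j"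
    "of_int j \<le> max (?a - \<epsilon> * ?c) (?a + \<epsilon> * ?c)"
    using int_between_if_floor_neq by (fastforce simp: shi_def inner_diff_left inner_add_left)
  then have c0: "?c \<noteq> 0" by auto
  define t where "t = (of_int j - ?a) / ?c"
  have tc: "t * ?c = of_int j - ?a" using c0 by (simp add: t_def)
  have "\<bar>t * ?c\<bar> \<le> \<epsilon> * \<bar>?c\<bar>"
  proof (cases "?c > 0")
    case True
    then have "0 < \<epsilon> * ?c" using e(1) by simp
    then show ?thesis using j True unfolding tc by (auto simp: min_def max_def split: if_splits)
  next
    case False
    then have "\<epsilon> * ?c < 0" using c0 e(1) by (simp add: mult_pos_neg)
    then show ?thesis using j False unfolding tc by (auto simp: min_def max_def split: if_splits)
  qed
  then have "\<bar>t\<bar> \<le> \<epsilon>" using c0 by (simp add: abs_mult)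
  then have "dist (w + t *\<^sub>R b) w < \<rho>"
    using e(2) mult_right_mono[of "\<bar>t\<bar>" \<epsilon> "norm b"] by (simp add: dist_norm)
  moreover have "(w + t *\<^sub>R b) \<bullet> \<beta> = of_int j" using tc by (simp add: inner_add_left)
  ultimately show False using wall_point_only_hyperplane[OF r W _ \<beta>(1)] \<beta>(2,3) by blast
qed

lemma shi_refl_wall_point:
  assumes r: "p \<in> regular \<Phi>" and W: "wall_point p b k w \<rho>"
  shows "\<And>\<beta>. \<beta> \<in> \<Phi> \<Longrightarrow> \<beta> \<noteq> b \<Longrightarrow> \<beta> \<noteq> - b \<Longrightarrow> shi \<beta> (refl b k p) = shi \<beta> p"
    and "shi b (refl b k p) = k - 1" and "shi (- b) (refl b k p) = - k"
proof -
  obtain \<epsilon> where e: "0 < \<epsilon>" "\<epsilon> * norm b < \<rho>" "\<epsilon> * (b \<bullet> b) < 1" using wall_point_eps[OF W] .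
  have b: "b \<in> \<Phi>" "w \<bullet> b = of_int k" using W by (auto simp: wall_point_def)
  have bb: "0 < b \<bullet> b" using root_nonzero[OF b(1)] by simp
  let ?v = "w + \<epsilon> *\<^sub>R b"
  have "dist ?v w < \<rho>" "of_int k < ?v \<bullet> b" using e bb b(2) by (simp_all add: dist_norm inner_add_left)
  then have shi_v: "\<forall>\<beta>\<in>\<Phi>. shi \<beta> ?v = shi \<beta> p" using W by (auto simp: wall_point_def)
  have "refl b k ?v = w - \<epsilon> *\<^sub>R b" using refl_hyp_add_scaleR[OF root_nonzero[OF b(1)] b(2)] .
  then have shi_p': "\<forall>\<beta>\<in>\<Phi>. shi \<beta> (refl b k p) = shi \<beta> (w - \<epsilon> *\<^sub>R b)"
    using same_shi_aff_sym[OF aff_sym_refl[OF b(1), of k] shi_v] by simp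
  have wb: "(w - \<epsilon> *\<^sub>R b) \<bullet> b = of_int k - \<epsilon> * (b \<bullet> b)" using b by (simp add: inner_diff_left)
  have "shi b (refl b k p) = shi b (w - \<epsilon> *\<^sub>R b)" using shi_p' b(1) by simp
  also have "\<dots> = k - 1" unfolding shi_def floor_eq_iff using wb e bb by simp
  finally show "shi b (refl b k p) = k - 1" .
  have "shi (- b) (refl b k p) = shi (- b) (w - \<epsilon> *\<^sub>R b)" using shi_p' uminus_root[OF b(1)] by simp
  also have "\<dots> = - k" unfolding shi_def floor_eq_iff using wb e bb by simp
  finally show "shi (- b) (refl b k p) = - k" .
  fix \<beta> assume "\<beta> \<in> \<Phi>" "\<beta> \<noteq> b" "\<beta> \<noteq> - b"
  then show "shi \<beta> (refl b k p) = shi \<beta> p"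
    using shi_across_wall_point[OF r W e(1,2)] shi_p' shi_v by simp
qed

lemma wall_point_closure:
  assumes W: "wall_point p b k w \<rho>" and z: "dist z w < \<rho>" "z \<bullet> b = of_int k" and r: "p \<in> regular \<Phi>"
  shows "z \<in> closure (alcove p)"
proof (rule in_closure_if_ray_in)
  have b: "b \<in> \<Phi>" using W by (simp add: wall_point_def)
  then have nb: "0 < norm b" "0 < b \<bullet> b" using root_nonzero by auto
  show "0 < (\<rho> - dist z w) / norm b" using z(1) nb by simp
  fix t assume t: "0 < t" "t < (\<rho> - dist z w) / norm b"
  then have "dist (z + t *\<^sub>R b) w < \<rho>"
    using dist_triangle[of "z + t *\<^sub>R b" w z] nb by (simp add: dist_norm pos_less_divide_eq)
  moreover have "of_int k < (z + t *\<^sub>R b) \<bullet> b" using z(2) t nb by (simp add: inner_add_left)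
  ultimately show "z + t *\<^sub>R b \<in> alcove p"
    using W same_shi_in_alcove[OF r] by (auto simp: wall_point_def)
qed

lemma wall_point_simple_refl:
  assumes r: "p \<in> regular \<Phi>" and W: "wall_point p b k w \<rho>"
  shows "refl b k \<in> simple_refls \<Phi> (alcove p)"
proof -
  have b: "b \<in> \<Phi>" "w \<bullet> b = of_int k" "0 < \<rho>" using W by (auto simp: wall_point_def)
  have nb: "0 < norm b" using root_nonzero[OF b(1)] by simp
  let ?w' = "w + (\<rho> / (2 * norm b)) *\<^sub>R rot90 b"
  have "dist ?w' w < \<rho>" using b(3) nb by (simp add: dist_norm)
  moreover have "?w' \<bullet> b = of_int k" using b(2) by (simp add: inner_add_left)
  ultimately have "w \<in> closure (alcove p) \<inter> hyp b k" "?w' \<in> closure (alcove p) \<inter> hyp b k"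
    using wall_point_closure[OF W _ _ r] b by (auto simp: hyp_def)
  moreover have "rot90 b \<noteq> 0" using nb by (metis norm_rot90 norm_zero less_irrefl)
  then have "w \<noteq> ?w'" using b(3) nb by simp
  ultimately show ?thesis
    using b(1) unfolding simple_refls_def by blast
qed

end

context root_sys
begin

text \<open>Here the plane is used: two distinct points of \<open>H\<^sub>b\<^sub>,\<^sub>k\<close> determine it, so they cannot both lie
  on another hyperplane.\<close>

lemma midpoint_wall_in_halfplanes:
  assumes r: "p \<in> regular \<Phi>" and b: "b \<in> \<Phi>" "shi b p = k"
    and p12: "p1 \<noteq> p2" "p1 \<in> closure (alcove p)" "p2 \<in> closure (alcove p)"
      "p1 \<bullet> b = of_int k" "p2 \<bullet> b = of_int k"
    and \<beta>: "\<beta> \<in> \<Phi>" "\<beta> \<noteq> b"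
  shows "of_int (shi \<beta> p) < ((1/2) *\<^sub>R (p1 + p2)) \<bullet> \<beta>"
proof (rule ccontr)
  let ?m = "(1/2) *\<^sub>R (p1 + p2)"
  assume "\<not> of_int (shi \<beta> p) < ?m \<bullet> \<beta>"
  moreover have "of_int (shi \<beta> p) \<le> p1 \<bullet> \<beta>" "of_int (shi \<beta> p) \<le> p2 \<bullet> \<beta>"
    using closure_alcove_shi_le \<beta>(1) p12(2,3) by blast+
  ultimately have "p1 \<bullet> \<beta> = of_int (shi \<beta> p)" "p2 \<bullet> \<beta> = of_int (shi \<beta> p)"
    by (simp_all add: inner_add_left)
  then have d\<beta>: "(p1 - p2) \<bullet> \<beta> = 0" by (simp add: inner_diff_left)
  have "(p1 - p2) \<bullet> b = 0" using p12(4,5) by (simp add: inner_diff_left)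
  then have d: "p1 - p2 = (((p1 - p2) \<bullet> rot90 b) / (b \<bullet> b)) *\<^sub>R rot90 b"
    using rot90_parallel_if_orthogonal[OF root_nonzero[OF b(1)]] by blast
  then have "(p1 - p2) \<bullet> rot90 b \<noteq> 0" using p12(1) by (metis divide_eq_0_iff eq_iff_diff_eq_0 scaleR_zero_left)
  then have "rot90 b \<bullet> \<beta> = 0" using d\<beta> root_nonzero[OF b(1)] by (subst (asm) d) simp
  then have "\<beta> = - b" using parallel_roots[OF b(1) \<beta>(1)] \<beta>(2) by (simp add: inner_commute)
  moreover have "?m \<bullet> b = of_int k" using p12(4,5) by (simp add: inner_add_left)
  moreover have "shi (- b) p = - k - 1" using shi_uminus[OF r b(1)] b(2) by simp
  ultimately show False using \<open>\<not> of_int (shi \<beta> p) < ?m \<bullet> \<beta>\<close> by simp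
qed

lemma simple_refl_wall_point:
  assumes r: "p \<in> regular \<Phi>" and s: "s \<in> simple_refls \<Phi> (alcove p)"
  shows "\<exists>b k w \<rho>. s = refl b k \<and> wall_point p b k w \<rho>"
proof -
  obtain b0 k0 p1 p2 where s0: "s = refl b0 k0" "b0 \<in> \<Phi>" "p1 \<noteq> p2"
    "p1 \<in> closure (alcove p)" "p2 \<in> closure (alcove p)" "p1 \<bullet> b0 = of_int k0" "p2 \<bullet> b0 = of_int k0"
    using s unfolding simple_refls_def hyp_def by blast
  obtain b k where bk: "s = refl b k" "b \<in> \<Phi>" "p1 \<bullet> b = of_int k" "p2 \<bullet> b = of_int k" "of_int k < p \<bullet> b"
  proof (cases "of_int k0 < p \<bullet> b0")
    case False
    moreover have "p \<bullet> b0 \<noteq> of_int k0" using r s0(2) by (simp add: regular_iff)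
    ultimately have "of_int (-k0) < p \<bullet> (-b0)" by simp
    then show ?thesis using that[of "-b0" "-k0"] uminus_root[OF s0(2)] s0 refl_uminus by simp
  qed (use that s0 in blast)
  let ?m = "(1/2) *\<^sub>R (p1 + p2)"
  have "k \<le> shi b p" using bk(5) unfolding shi_def by (simp add: le_floor_iff)
  moreover have "of_int (shi b p) \<le> p1 \<bullet> b" using closure_alcove_shi_le[OF s0(4) bk(2)] .
  ultimately have shi_b: "shi b p = k" using bk(3) by simp
  let ?U = "\<Inter>\<beta>\<in>\<Phi> - {b}. {v. of_int (shi \<beta> p) < \<beta> \<bullet> v}"
  have "open ?U" using finite_roots by (intro open_INT) (auto intro: open_halfspace_gt)
  moreover have "?m \<in> ?U"
    using midpoint_wall_in_halfplanes[OF r bk(2) shi_b s0(3-5) bk(3,4)] by (auto simp: inner_commute)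
  ultimately obtain \<rho> where \<rho>: "0 < \<rho>" "ball ?m \<rho> \<subseteq> ?U" using open_contains_ball by blast
  have "wall_point p b k ?m \<rho>" unfolding wall_point_def
  proof (intro conjI allI impI bk(2) \<rho>(1))
    show "?m \<bullet> b = of_int k" using bk(3,4) by (simp add: inner_add_left)
    fix v assume "dist v ?m < \<rho>" "of_int k < v \<bullet> b"
    then have "v \<in> alcove p" using \<rho>(2) shi_b by (auto simp: alcove_def inner_commute dist_commute)
    then show "\<forall>\<beta>\<in>\<Phi>. shi \<beta> v = shi \<beta> p" using shi_alcove[OF r] by blast
  qed
  then show ?thesis using bk(1) by blast
qed

definition halfplanes :: "pt \<Rightarrow> pt set \<Rightarrow> pt set" where
  "halfplanes p J = {v. \<forall>\<beta>\<in>J. of_int (shi \<beta> p) < v \<bullet> \<beta>}"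

lemma open_halfplanes: "finite J \<Longrightarrow> open (halfplanes p J)"
proof -
  assume "finite J"
  have "halfplanes p J = (\<Inter>\<beta>\<in>J. {v. of_int (shi \<beta> p) < \<beta> \<bullet> v})"
    by (auto simp: halfplanes_def inner_commute)
  then show ?thesis using \<open>finite J\<close> by (auto intro!: open_INT open_halfspace_gt)
qed

lemma convex_halfplanes: "convex (halfplanes p J)"
proof -
  have "halfplanes p J = (\<Inter>\<beta>\<in>J. {v. of_int (shi \<beta> p) < \<beta> \<bullet> v})"
    by (auto simp: halfplanes_def inner_commute)
  then show ?thesis by (auto intro!: convex_INT convex_halfspace_gt)
qed

text \<open>Proved by taking a minimal set \<open>J\<close> of roots whose half-planes cut out the alcove.\<close>

lemma exists_essential_halfplane:
  assumes "q \<notin> alcove p"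
  obtains J b y where "J \<subseteq> \<Phi>" "halfplanes p J = alcove p" "b \<in> J" "\<not> of_int (shi b p) < q \<bullet> b"
    "y \<in> halfplanes p (J - {b})" "\<not> of_int (shi b p) < y \<bullet> b"
proof -
  define P where "P J \<longleftrightarrow> J \<subseteq> \<Phi> \<and> halfplanes p J = alcove p" for J
  have "P \<Phi>" by (simp add: P_def halfplanes_def alcove_def)
  then obtain J where J: "P J" and min: "\<And>J'. P J' \<Longrightarrow> card J \<le> card J'"
    using ex_has_least_nat[of P \<Phi> card] by blast
  have fin: "finite J" using J finite_roots finite_subset by (auto simp: P_def)
  have "q \<notin> halfplanes p J" using J assms by (simp add: P_def)
  then obtain b where b: "b \<in> J" "\<not> of_int (shi b p) < q \<bullet> b"
    unfolding halfplanes_def by blast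
  have "card (J - {b}) < card J" using fin b(1) by (rule card_Diff1_less)
  then have "\<not> P (J - {b})" using min[of "J - {b}"] by linarith
  then have "halfplanes p (J - {b}) \<noteq> alcove p" using J unfolding P_def by blast
  moreover have "halfplanes p J \<subseteq> halfplanes p (J - {b})" by (auto simp: halfplanes_def)
  ultimately obtain y where y: "y \<in> halfplanes p (J - {b})" "y \<notin> halfplanes p J"
    using J unfolding P_def by blast
  then have "\<not> of_int (shi b p) < y \<bullet> b" unfolding halfplanes_def by blast
  then show ?thesis using that J b y(1) unfolding P_def by blast
qed

lemma exists_separating_wall:
  assumes r: "p \<in> regular \<Phi>" and rq: "q \<in> regular \<Phi>" and q: "q \<notin> alcove p"
  shows "\<exists>b k w \<rho>. wall_point p b k w \<rho> \<and> q \<bullet> b < of_int k"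
proof -
  obtain J b y where J: "J \<subseteq> \<Phi>" "halfplanes p J = alcove p" "b \<in> J"
    and qb: "\<not> of_int (shi b p) < q \<bullet> b"
    and y: "y \<in> halfplanes p (J - {b})" "\<not> of_int (shi b p) < y \<bullet> b"
    using exists_essential_halfplane[OF q] .
  have b: "b \<in> \<Phi>" using J by auto
  define k where "k = shi b p"
  have "q \<bullet> b \<noteq> of_int k" using rq b by (simp add: regular_iff)
  then have "q \<bullet> b < of_int k" using qb by (simp add: k_def)
  have pb: "of_int k < p \<bullet> b" using shi_strict[OF r b] by (simp add: k_def)
  txt \<open>\<open>w\<close> is where the segment from \<open>p\<close> to \<open>y\<close> leaves the half-plane of \<open>b\<close>.\<close>
  define l where "l = (p \<bullet> b - of_int k) / (p \<bullet> b - y \<bullet> b)"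
  have l: "0 < l" "l \<le> 1" using pb y(2) by (simp_all add: l_def k_def)
  define w where "w = (1 - l) *\<^sub>R p + l *\<^sub>R y"
  have "p \<bullet> b - y \<bullet> b \<noteq> 0" using pb y(2) by (simp add: k_def)
  moreover have "w \<bullet> b = p \<bullet> b - l * (p \<bullet> b - y \<bullet> b)"
    by (simp add: w_def inner_add_left algebra_simps)
  ultimately have wb: "w \<bullet> b = of_int k" by (simp add: l_def)
  have "p \<in> halfplanes p (J - {b})"
    using alcove_self[OF r] J(2) by (auto simp: halfplanes_def)
  then have "w \<in> halfplanes p (J - {b})"
    using y(1) l convex_halfplanes unfolding w_def convex_alt by simp
  moreover have "open (halfplanes p (J - {b}))"
    using J(1) finite_roots by (intro open_halfplanes) (auto intro: finite_subset)
  ultimately obtain \<rho> where \<rho>: "0 < \<rho>" "ball w \<rho> \<subseteq> halfplanes p (J - {b})"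
    using open_contains_ball by blast
  have "wall_point p b k w \<rho>" unfolding wall_point_def
  proof (intro conjI allI impI b wb \<rho>(1))
    fix v assume "dist v w < \<rho>" "of_int k < v \<bullet> b"
    moreover from this have "v \<in> halfplanes p (J - {b})" using \<rho>(2) by (auto simp: dist_commute)
    ultimately have "v \<in> halfplanes p J" by (auto simp: halfplanes_def k_def)
    then show "\<forall>\<beta>\<in>\<Phi>. shi \<beta> v = shi \<beta> p" using J(2) shi_alcove[OF r] by blast
  qed
  then show ?thesis using \<open>q \<bullet> b < of_int k\<close> by blast
qed

lemma shi_dist_refl_wall:
  assumes r: "p \<in> regular \<Phi>" and W: "wall_point p b k w \<rho>" and rq: "q \<in> regular \<Phi>"
  shows "shi_dist (refl b k p) q = shi_dist p q + (if q \<bullet> b < of_int k then -2 else 2)"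
proof -
  have b: "b \<in> \<Phi>" using W by (simp add: wall_point_def)
  let ?p' = "refl b k p" and ?rest = "\<lambda>x. \<Sum>\<beta>\<in>\<Phi> - {b} - {-b}. \<bar>shi \<beta> x - shi \<beta> q\<bar>"
  have "?rest ?p' = ?rest p"
    using shi_refl_wall_point(1)[OF r W] by (intro sum.cong) auto
  moreover have "shi b p = k" "shi (-b) p = - k - 1"
    using wall_point_shi[OF r W] shi_uminus[OF r b] by simp_all
  moreover have "shi b ?p' = k - 1" "shi (-b) ?p' = - k" using shi_refl_wall_point(2,3)[OF r W] .
  ultimately have
    "shi_dist ?p' q = \<bar>k - 1 - shi b q\<bar> + \<bar>- k + shi b q + 1\<bar> + ?rest p"
    "shi_dist p q = \<bar>k - shi b q\<bar> + \<bar>- k + shi b q\<bar> + ?rest p"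
    unfolding shi_dist_def sum_roots_split[OF b] shi_uminus[OF rq b] by simp_all
  moreover have "q \<bullet> b < of_int k \<longleftrightarrow> shi b q \<le> k - 1"
    unfolding shi_def using floor_less_iff[of "q \<bullet> b" k] by linarith
  ultimately show ?thesis by (cases "q \<bullet> b < of_int k") simp_all
qed

end

section \<open>The simple reflections generate \<open>W\<close>\<close>

definition wprod :: "(pt \<Rightarrow> pt) list \<Rightarrow> pt \<Rightarrow> pt" where
  "wprod ws = foldr (\<circ>) ws id"

lemma wprod_Nil [simp]: "wprod [] = id"
  by (simp add: wprod_def)

lemma wprod_Cons [simp]: "wprod (s # ws) = s \<circ> wprod ws"
  by (simp add: wprod_def)

lemma wprod_append: "wprod (xs @ ys) = wprod xs \<circ> wprod ys"
  by (induction xs) (auto simp: comp_assoc)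

context root_sys
begin

lemma exists_generic_hyp_point:
  assumes b: "b \<in> \<Phi>"
  obtains w where "w \<bullet> b = of_int k" "\<forall>\<beta>\<in>\<Phi> - {b, -b}. \<forall>j::int. w \<bullet> \<beta> \<noteq> of_int j"
proof -
  let ?z = "(of_int k / (b \<bullet> b)) *\<^sub>R b" and ?I = "\<Phi> - {b, -b}"
  have zb: "?z \<bullet> b = of_int k" using root_nonzero[OF b] by simp
  have e\<beta>: "rot90 b \<bullet> \<beta> \<noteq> 0" if "\<beta> \<in> ?I" for \<beta>
    using parallel_roots[OF b, of \<beta>] that by (auto simp: inner_commute)
  txt \<open>Only countably many points of the line \<open>H\<^sub>b\<^sub>,\<^sub>k\<close> lie on another hyperplane.\<close>
  define bad where "bad = (\<Union>\<beta>\<in>?I. range (\<lambda>j::int. (of_int j - ?z \<bullet> \<beta>) / (rot90 b \<bullet> \<beta>)))"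
  have "countable bad" unfolding bad_def using finite_roots by (intro countable_UN) (auto intro: countable_finite)
  then obtain t where t: "t \<notin> bad" using uncountable_UNIV_real by (metis UNIV_eq_I)
  let ?w = "?z + t *\<^sub>R rot90 b"
  have "?w \<bullet> \<beta> \<noteq> of_int j" if "\<beta> \<in> ?I" for \<beta> and j :: int
  proof
    assume "?w \<bullet> \<beta> = of_int j"
    then have "t = (of_int j - ?z \<bullet> \<beta>) / (rot90 b \<bullet> \<beta>)"
      using e\<beta>[OF that] by (simp add: inner_add_left field_simps)
    then show False using t that unfolding bad_def by blast
  qed
  moreover have "?w \<bullet> b = of_int k" using zb by (simp add: inner_add_left)
  ultimately show ?thesis using that by blast
qed

lemma shi_near_generic_point:
  assumes b: "b \<in> \<Phi>" "w \<bullet> b = of_int k" and gen: "\<forall>\<beta>\<in>\<Phi> - {b, -b}. \<forall>j::int. w \<bullet> \<beta> \<noteq> of_int j"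
  obtains \<rho> where "0 < \<rho>" "\<And>v. dist v w < \<rho> \<Longrightarrow> of_int k < v \<bullet> b \<Longrightarrow>
      v \<in> regular \<Phi> \<and> (\<forall>\<beta>\<in>\<Phi>. shi \<beta> v = (if \<beta> = b then k else if \<beta> = -b then -k-1 else shi \<beta> w))"
proof -
  let ?I = "\<Phi> - {b, -b}"
  define U where "U = (\<Inter>\<beta>\<in>?I. {v. of_int (shi \<beta> w) < \<beta> \<bullet> v} \<inter> {v. \<beta> \<bullet> v < of_int (shi \<beta> w) + 1})"
  have "open U" unfolding U_def using finite_roots
    by (intro open_INT open_Int) (auto intro: open_halfspace_gt open_halfspace_lt)
  moreover have "w \<in> U"
    using gen of_int_floor_le real_of_int_floor_add_one_gt
    unfolding U_def shi_def by (force simp: inner_commute order_le_less)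
  ultimately obtain \<rho>0 where \<rho>0: "0 < \<rho>0" "ball w \<rho>0 \<subseteq> U" using open_contains_ball by blast
  have nb: "0 < norm b" using root_nonzero[OF b(1)] by simp
  define \<rho> where "\<rho> = min \<rho>0 (1 / norm b)"
  show ?thesis
  proof (rule that)
    show "0 < \<rho>" using \<rho>0 nb by (simp add: \<rho>_def)
    fix v assume v: "dist v w < \<rho>" "of_int k < v \<bullet> b"
    have "\<bar>(v - w) \<bullet> b\<bar> \<le> norm (v - w) * norm b" by (rule Cauchy_Schwarz_ineq2)
    also have "\<dots> < 1 / norm b * norm b"
      using v(1) nb by (intro mult_strict_right_mono) (auto simp: \<rho>_def dist_norm)
    finally have near: "v \<bullet> b < of_int k + 1" using b(2) nb by (simp add: inner_diff_left)
    have "v \<in> U" using v(1) \<rho>0(2) by (auto simp: \<rho>_def dist_commute)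
    then have other: "of_int (shi \<beta> w) < v \<bullet> \<beta> \<and> v \<bullet> \<beta> < of_int (shi \<beta> w) + 1" if "\<beta> \<in> ?I" for \<beta>
      using that unfolding U_def by (auto simp: inner_commute)
    define G where "G \<beta> = (if \<beta> = b then k else if \<beta> = -b then -k-1 else shi \<beta> w)" for \<beta>
    have G: "of_int (G \<beta>) < v \<bullet> \<beta> \<and> v \<bullet> \<beta> < of_int (G \<beta>) + 1" if "\<beta> \<in> \<Phi>" for \<beta>
      using that v(2) near other by (auto simp: G_def)
    then have "v \<in> regular \<Phi>" by (blast intro: regular_if_between)
    moreover have "\<forall>\<beta>\<in>\<Phi>. shi \<beta> v = G \<beta>" using G by (simp add: shi_def floor_eq_iff less_imp_le)
    ultimately show "v \<in> regular \<Phi> \<and> (\<forall>\<beta>\<in>\<Phi>. shi \<beta> v = (if \<beta> = b then k else if \<beta> = -b then -k-1 else shi \<beta> w))"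
      by (simp add: G_def)
  qed
qed

lemma exists_alcove_with_wall:
  assumes b: "b \<in> \<Phi>"
  obtains q w \<rho> where "q \<in> regular \<Phi>" "wall_point q b k w \<rho>"
proof -
  obtain w where w: "w \<bullet> b = of_int k" "\<forall>\<beta>\<in>\<Phi> - {b, -b}. \<forall>j::int. w \<bullet> \<beta> \<noteq> of_int j"
    using exists_generic_hyp_point[OF b] .
  obtain \<rho> where \<rho>: "0 < \<rho>" and near: "\<And>v. dist v w < \<rho> \<Longrightarrow> of_int k < v \<bullet> b \<Longrightarrow>
      v \<in> regular \<Phi> \<and> (\<forall>\<beta>\<in>\<Phi>. shi \<beta> v = (if \<beta> = b then k else if \<beta> = -b then -k-1 else shi \<beta> w))"
    using shi_near_generic_point[OF b w] by blast
  have nb: "0 < norm b" "0 < b \<bullet> b" using root_nonzero[OF b] by auto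
  let ?q = "w + (\<rho> / (2 * norm b)) *\<^sub>R b"
  have "dist ?q w < \<rho>" using \<rho> nb by (simp add: dist_norm)
  moreover have "of_int k < ?q \<bullet> b" using w(1) \<rho> nb by (simp add: inner_add_left)
  ultimately have "?q \<in> regular \<Phi>" "wall_point ?q b k w \<rho>"
    using near[of ?q] near b w(1) \<rho> by (auto simp: wall_point_def)
  then show ?thesis using that by blast
qed

lemma wall_point_aff_sym:
  assumes r: "aff_sym g L \<tau>" and h: "\<And>x. g (h x) = x" and W: "wall_point p b k w \<rho>"
  shows "wall_point (g p) (L b) (k + \<lfloor>\<tau> \<bullet> L b\<rfloor>) (g w) \<rho>"
proof -
  have b: "b \<in> \<Phi>" "w \<bullet> b = of_int k" "0 < \<rho>" using W by (auto simp: wall_point_def)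
  have \<tau>: "\<tau> \<bullet> L b = of_int \<lfloor>\<tau> \<bullet> L b\<rfloor>" using aff_sym_translation_Ints[OF r b(1)] .
  show ?thesis unfolding wall_point_def
  proof (intro conjI allI impI)
    show "L b \<in> \<Phi>" using aff_sym_root[OF r b(1)] .
    show "g w \<bullet> L b = of_int (k + \<lfloor>\<tau> \<bullet> L b\<rfloor>)" using aff_sym_inner[OF r, of w b] b(2) \<tau> by simp
    show "0 < \<rho>" using b(3) .
    fix v assume v: "dist v (g w) < \<rho>" "of_int (k + \<lfloor>\<tau> \<bullet> L b\<rfloor>) < v \<bullet> L b"
    have "dist (h v) w < \<rho>" using v(1) aff_sym_dist[OF r, of "h v" w] h by simp
    moreover have "of_int k < h v \<bullet> b" using v(2) aff_sym_inner[OF r, of "h v" b] h \<tau> by simp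
    ultimately have "\<forall>\<beta>\<in>\<Phi>. shi \<beta> (h v) = shi \<beta> p" using W by (auto simp: wall_point_def)
    from same_shi_aff_sym[OF r this] show "\<forall>\<beta>\<in>\<Phi>. shi \<beta> v = shi \<beta> (g p)" using h by simp
  qed
qed

end

locale based_root_sys = root_sys +
  fixes p0 :: pt
  assumes p0_regular: "p0 \<in> regular \<Phi>"
begin

abbreviation S :: "(pt \<Rightarrow> pt) set" where
  "S \<equiv> simple_refls \<Phi> (alcove p0)"

lemma simple_refl_refl: "s \<in> S \<Longrightarrow> \<exists>b k. b \<in> \<Phi> \<and> s = refl b k"
  by (auto simp: simple_refls_def)

lemma simple_refl_invol: "s \<in> S \<Longrightarrow> s (s x) = x"
  using simple_refl_refl refl_refl root_nonzero by blast

lemma simple_refl_comp_self: "s \<in> S \<Longrightarrow> s \<circ> s = id"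
  using simple_refl_invol by auto

lemma wprod_affW: "set ws \<subseteq> S \<Longrightarrow> wprod ws \<in> affW \<Phi>"
proof (induction ws)
  case (Cons s ws)
  then have "s \<in> refls \<Phi>" using simple_refl_refl[of s] unfolding refls_def by auto
  with Cons have "s \<circ> wprod ws \<in> affW \<Phi>" by (intro affW.step) auto
  then show ?case by (simp only: wprod_Cons)
qed (simp add: affW.id)

lemma wprod_rev_inverse:
  "set ws \<subseteq> S \<Longrightarrow> wprod ws \<circ> wprod (rev ws) = id \<and> wprod (rev ws) \<circ> wprod ws = id"
proof (induction ws)
  case (Cons s ws)
  then have s: "s \<circ> s = id" using simple_refl_comp_self by simp
  have "set ws \<subseteq> S" using Cons.prems by simp
  then have IH: "wprod ws \<circ> wprod (rev ws) = id" "wprod (rev ws) \<circ> wprod ws = id"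
    using Cons.IH by blast+
  have "wprod (s # ws) \<circ> wprod (rev (s # ws)) = s \<circ> (wprod ws \<circ> wprod (rev ws)) \<circ> s"
    by (simp add: wprod_append comp_assoc)
  also have "\<dots> = id" using IH s by simp
  finally have "wprod (s # ws) \<circ> wprod (rev (s # ws)) = id" .
  moreover have "wprod (rev (s # ws)) \<circ> wprod (s # ws) = wprod (rev ws) \<circ> (s \<circ> s) \<circ> wprod ws"
    by (simp add: wprod_append comp_assoc)
  then have "wprod (rev (s # ws)) \<circ> wprod (s # ws) = id" using IH s by simp
  ultimately show ?case by blast
qed simp

lemma alcove_reachable:
  assumes "q \<in> regular \<Phi>"
  shows "\<exists>ws. set ws \<subseteq> S \<and> (\<forall>\<beta>\<in>\<Phi>. shi \<beta> (wprod ws p0) = shi \<beta> q)"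
  using assms
proof (induction "nat (shi_dist p0 q)" arbitrary: q rule: less_induct)
  case less
  show ?case
  proof (cases "q \<in> alcove p0")
    case True
    then show ?thesis using shi_alcove[OF p0_regular] by (intro exI[of _ "[]"]) simp
  next
    case False
    obtain b k w \<rho> where W: "wall_point p0 b k w \<rho>" and qb: "q \<bullet> b < of_int k"
      using exists_separating_wall[OF p0_regular less.prems False] by blast
    have b: "b \<in> \<Phi>" using W by (simp add: wall_point_def)
    let ?s = "refl b k"
    have s: "aff_sym ?s (refl b 0) (of_int k *\<^sub>R coroot b)" using aff_sym_refl[OF b] .
    have ss: "?s (?s x) = x" for x using refl_refl[OF root_nonzero[OF b]] .
    have "shi_dist p0 (?s q) = shi_dist (?s p0) q"
      using shi_dist_aff_sym[OF s, of p0 "?s q"] ss by simp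
    also have "\<dots> = shi_dist p0 q - 2" using shi_dist_refl_wall[OF p0_regular W less.prems] qb by simp
    finally have "nat (shi_dist p0 (?s q)) < nat (shi_dist p0 q)"
      using shi_dist_nonneg[of p0 "?s q"] by simp
    then obtain ws where ws: "set ws \<subseteq> S" "\<forall>\<beta>\<in>\<Phi>. shi \<beta> (wprod ws p0) = shi \<beta> (?s q)"
      using less.hyps aff_sym_regular[OF s less.prems] by blast
    have "\<forall>\<beta>\<in>\<Phi>. shi \<beta> (wprod (?s # ws) p0) = shi \<beta> q"
      using same_shi_aff_sym[OF s ws(2)] ss by simp
    moreover have "?s \<in> S" using wall_point_simple_refl[OF p0_regular W] .
    ultimately show ?thesis using ws(1) by (intro exI[of _ "?s # ws"]) simp
  qed
qed

text \<open>A reflection \<open>s\<^sub>b\<^sub>,\<^sub>k\<close> is conjugate, by the word \<open>u\<close> moving \<open>A0\<close> to an alcove with wall \<open>H\<^sub>b\<^sub>,\<^sub>k\<close>,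
  to the simple reflection in the corresponding wall of \<open>A0\<close>.\<close>

lemma refl_eq_wprod:
  assumes b: "b \<in> \<Phi>"
  shows "\<exists>ws. set ws \<subseteq> S \<and> refl b k = wprod ws"
proof -
  obtain q w \<rho> where q: "q \<in> regular \<Phi>" "wall_point q b k w \<rho>"
    using exists_alcove_with_wall[OF b] .
  obtain ws where ws: "set ws \<subseteq> S" "\<forall>\<beta>\<in>\<Phi>. shi \<beta> (wprod ws p0) = shi \<beta> q"
    using alcove_reachable[OF q(1)] by blast
  let ?u = "wprod ws" and ?u' = "wprod (rev ws)"
  have inv: "?u \<circ> ?u' = id" "?u' \<circ> ?u = id" using wprod_rev_inverse[OF ws(1)] by auto
  have inv': "?u' (?u x) = x" for x using fun_cong[OF inv(2), of x] by simp
  have "set (rev ws) \<subseteq> S" using ws(1) by simp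
  then obtain L \<tau> where r: "aff_sym ?u' L \<tau>" using affW_aff_sym[OF wprod_affW] by blast
  let ?b' = "L b" and ?k' = "k + \<lfloor>\<tau> \<bullet> L b\<rfloor>"
  have "wall_point (?u' q) ?b' ?k' (?u' w) \<rho>"
    using wall_point_aff_sym[OF r inv' q(2)] .
  moreover have "\<forall>\<beta>\<in>\<Phi>. shi \<beta> (?u' q) = shi \<beta> p0"
    using same_shi_aff_sym[OF r ws(2)] inv' by simp
  ultimately have "refl ?b' ?k' \<in> S"
    using wall_point_simple_refl[OF p0_regular] wall_point_cong by blast
  moreover have "refl b k = ?u \<circ> refl ?b' ?k' \<circ> ?u'"
  proof -
    have "refl b k = (?u \<circ> ?u') \<circ> refl b k" using inv(1) by simp
    also have "\<dots> = ?u \<circ> refl ?b' ?k' \<circ> ?u'"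
      using aff_sym_conj_refl[OF r b, of k] by (simp add: comp_assoc)
    finally show ?thesis .
  qed
  ultimately show ?thesis
    using ws(1) by (intro exI[of _ "ws @ [refl ?b' ?k'] @ rev ws"]) (auto simp: wprod_append)
qed

lemma affW_eq_wprod: "g \<in> affW \<Phi> \<Longrightarrow> \<exists>ws. set ws \<subseteq> S \<and> g = wprod ws"
proof (induction rule: affW.induct)
  case id
  then show ?case by (intro exI[of _ "[]"]) simp
next
  case (step r w)
  then obtain b k where "b \<in> \<Phi>" "r = refl b k" by (auto simp: refls_def)
  then obtain rs where "set rs \<subseteq> S" "r = wprod rs" using refl_eq_wprod by blast
  moreover obtain ws where "set ws \<subseteq> S" "w = wprod ws" using step.IH by blast
  ultimately show ?case by (intro exI[of _ "rs @ ws"]) (simp add: wprod_append)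
qed

end

section \<open>Length counts separating hyperplanes\<close>

definition separates :: "pt \<Rightarrow> pt \<Rightarrow> pt \<Rightarrow> int \<Rightarrow> bool" where
  "separates x y b k \<longleftrightarrow>
     (x \<bullet> b < of_int k \<and> of_int k < y \<bullet> b) \<or> (y \<bullet> b < of_int k \<and> of_int k < x \<bullet> b)"

lemma separates_shi_neq: "separates x y b k \<Longrightarrow> shi b x \<noteq> shi b y"
  unfolding separates_def shi_def by (metis floor_less_iff le_floor_iff less_le not_less)

context root_sys
begin

lemma separates_aff_sym:
  assumes r: "aff_sym g L \<tau>" and b: "b \<in> \<Phi>"
  shows "separates x y b k \<longleftrightarrow> separates (g x) (g y) (L b) (k + \<lfloor>\<tau> \<bullet> L b\<rfloor>)"
proof -
  have "g v \<bullet> L b = v \<bullet> b + of_int \<lfloor>\<tau> \<bullet> L b\<rfloor>" for v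
    using aff_sym_inner[OF r, of v b] aff_sym_translation_Ints[OF r b] by simp
  then show ?thesis unfolding separates_def by auto
qed

lemma separates_refl_wall_point:
  assumes r: "p \<in> regular \<Phi>" and W: "wall_point p c j w \<rho>" and b: "b \<in> \<Phi>"
    and sep: "separates p (refl c j p) b k"
  shows "refl b k = refl c j"
proof -
  have c: "c \<in> \<Phi>" using W by (simp add: wall_point_def)
  have "shi b p \<noteq> shi b (refl c j p)" using separates_shi_neq[OF sep] .
  then have "b = c \<or> b = - c" using shi_refl_wall_point(1)[OF r W b] by auto
  have "refl c j p \<in> regular \<Phi>" using aff_sym_regular[OF aff_sym_refl[OF c] r] .
  then have bounds: "of_int (j - 1) < refl c j p \<bullet> c" "refl c j p \<bullet> c < of_int j"
    "of_int j < p \<bullet> c" "p \<bullet> c < of_int j + 1"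
    using shi_strict[of "refl c j p" c] shi_strict[OF r c] c shi_refl_wall_point(2)[OF r W]
      wall_point_shi[OF r W] by auto
  show ?thesis using \<open>b = c \<or> b = - c\<close>
  proof (elim disjE)
    assume "b = c"
    with sep bounds have "of_int (j - 1) < (of_int k :: real)" "(of_int k :: real) < of_int (j + 1)"
      unfolding separates_def by auto
    then have "k = j" by simp
    then show ?thesis using \<open>b = c\<close> by simp
  next
    assume "b = - c"
    with sep bounds have "of_int (- j - 1) < (of_int k :: real)" "(of_int k :: real) < of_int (- j + 1)"
      unfolding separates_def by auto
    then have "k = - j" by simp
    then show ?thesis using \<open>b = - c\<close> refl_uminus by simp
  qed
qed

end

context based_root_sys
begin

lemma exchange_condition:
  assumes "set ws \<subseteq> S" "b \<in> \<Phi>" "separates p0 (wprod ws p0) b k"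
  shows "\<exists>i<length ws. refl b k \<circ> wprod ws = wprod (take i ws @ drop (Suc i) ws)"
  using assms
proof (induction ws arbitrary: b k)
  case Nil
  then show ?case by (auto simp: separates_def)
next
  case (Cons s ws)
  have sS: "s \<in> S" and sub: "set ws \<subseteq> S" using Cons.prems by auto
  obtain c j w \<rho> where sc: "s = refl c j" and W: "wall_point p0 c j w \<rho>"
    using simple_refl_wall_point[OF p0_regular sS] by blast
  have c: "c \<in> \<Phi>" using W by (simp add: wall_point_def)
  have rs: "aff_sym s (refl c 0) (of_int j *\<^sub>R coroot c)" using aff_sym_refl[OF c] sc by simp
  define b' where "b' = refl c 0 b"
  define k' where "k' = k + \<lfloor>(of_int j *\<^sub>R coroot c) \<bullet> b'\<rfloor>"
  have b': "b' \<in> \<Phi>" using refl0_root_closed[OF c Cons.prems(2)] by (simp add: b'_def)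
  have ss: "s \<circ> s = id" "\<And>x. s (s x) = x" using simple_refl_comp_self[OF sS] simple_refl_invol[OF sS] by auto
  have "s \<circ> refl b k = refl b' k' \<circ> s"
    using aff_sym_conj_refl[OF rs Cons.prems(2), of k] by (simp add: b'_def k'_def)
  then have com: "refl b k \<circ> s = s \<circ> refl b' k'"
    using ss(1) by (metis comp_assoc comp_id id_comp)
  have sep': "separates (s p0) (wprod ws p0) b' k'"
    using Cons.prems(3) separates_aff_sym[OF rs Cons.prems(2), of p0 "s (wprod ws p0)" k] ss(2)
    by (simp add: b'_def k'_def)
  show ?case
  proof (cases "separates p0 (wprod ws p0) b' k'")
    case True
    then obtain i where i: "i < length ws" "refl b' k' \<circ> wprod ws = wprod (take i ws @ drop (Suc i) ws)"
      using Cons.IH[OF sub b'] by blast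
    have "refl b k \<circ> wprod (s # ws) = (refl b k \<circ> s) \<circ> wprod ws" by (simp add: comp_assoc)
    also have "\<dots> = s \<circ> (refl b' k' \<circ> wprod ws)" using com by (simp add: comp_assoc)
    also have "\<dots> = wprod (take (Suc i) (s # ws) @ drop (Suc (Suc i)) (s # ws))" using i(2) by simp
    finally have "refl b k \<circ> wprod (s # ws) = wprod (take (Suc i) (s # ws) @ drop (Suc (Suc i)) (s # ws))" .
    moreover have "Suc i < length (s # ws)" using i(1) by simp
    ultimately show ?thesis by blast
  next
    case False
    txt \<open>Then the hyperplane separates \<open>p0\<close> from \<open>s p0\<close>, so it is the wall of \<open>s\<close>.\<close>
    have "p0 \<bullet> b' \<noteq> of_int k'" using p0_regular b' by (simp add: regular_iff)
    then have "separates p0 (s p0) b' k'" using sep' False unfolding separates_def by auto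
    then have "refl b' k' = s" using separates_refl_wall_point[OF p0_regular W b'] sc by simp
    then have "refl b k \<circ> wprod (s # ws) = wprod (take 0 (s # ws) @ drop (Suc 0) (s # ws))"
      using com ss(1) by (simp add: comp_assoc [symmetric])
    then show ?thesis by blast
  qed
qed

lemma shi_dist_simple_refl:
  assumes sS: "s \<in> S" and rx: "x \<in> regular \<Phi>"
  shows "shi_dist p0 (s x) = shi_dist p0 x + 2 \<or>
    (shi_dist p0 (s x) = shi_dist p0 x - 2 \<and> (\<exists>c j. c \<in> \<Phi> \<and> s = refl c j \<and> separates p0 x c j))"
proof -
  obtain c j w \<rho> where sc: "s = refl c j" and W: "wall_point p0 c j w \<rho>"
    using simple_refl_wall_point[OF p0_regular sS] by blast
  have c: "c \<in> \<Phi>" using W by (simp add: wall_point_def)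
  have rs: "aff_sym s (refl c 0) (of_int j *\<^sub>R coroot c)" using aff_sym_refl[OF c] sc by simp
  have "shi_dist p0 (s x) = shi_dist (s p0) x"
    using shi_dist_aff_sym[OF rs, of p0 "s x"] simple_refl_invol[OF sS] by simp
  also have "\<dots> = shi_dist p0 x + (if x \<bullet> c < of_int j then -2 else 2)"
    using shi_dist_refl_wall[OF p0_regular W rx] sc by simp
  finally show ?thesis
    using wall_point_shi(2)[OF p0_regular W] sc c by (auto simp: separates_def)
qed

lemma shi_dist_reduced_word:
  assumes "set ws \<subseteq> S" "\<And>ws'. set ws' \<subseteq> S \<Longrightarrow> wprod ws' = wprod ws \<Longrightarrow> length ws \<le> length ws'"
  shows "shi_dist p0 (wprod ws p0) = 2 * int (length ws)"
  using assms
proof (induction ws)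
  case Nil
  then show ?case by (simp add: shi_dist_def)
next
  case (Cons s ws)
  have sS: "s \<in> S" and sub: "set ws \<subseteq> S" using Cons.prems by auto
  have "length ws \<le> length ws'" if "set ws' \<subseteq> S" "wprod ws' = wprod ws" for ws'
    using Cons.prems(2)[of "s # ws'"] that sS by simp
  then have IH: "shi_dist p0 (wprod ws p0) = 2 * int (length ws)" using Cons.IH[OF sub] by blast
  have rx: "wprod ws p0 \<in> regular \<Phi>" using affW_regular[OF wprod_affW[OF sub] p0_regular] .
  show ?case
  proof (cases "shi_dist p0 (s (wprod ws p0)) = shi_dist p0 (wprod ws p0) + 2")
    case True
    then show ?thesis using IH by simp
  next
    case False
    then obtain c j where cj: "c \<in> \<Phi>" "s = refl c j" "separates p0 (wprod ws p0) c j"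
      using shi_dist_simple_refl[OF sS rx] by blast
    obtain i where i: "i < length ws" "refl c j \<circ> wprod ws = wprod (take i ws @ drop (Suc i) ws)"
      using exchange_condition[OF sub cj(1) cj(3)] by blast
    let ?ws' = "take i ws @ drop (Suc i) ws"
    have "set ?ws' \<subseteq> S" using sub set_take_subset[of i ws] set_drop_subset[of "Suc i" ws] by auto
    moreover have "wprod ?ws' = wprod (s # ws)" using i(2) cj(2) by simp
    ultimately have "length (s # ws) \<le> length ?ws'" using Cons.prems(2) by blast
    then show ?thesis using i(1) by simp
  qed
qed

lemma len_eq_shi_dist:
  assumes g: "g \<in> affW \<Phi>"
  shows "2 * int (len \<Phi> (alcove p0) g) = shi_dist p0 (g p0)"
proof -
  let ?P = "\<lambda>n. \<exists>ws. length ws = n \<and> set ws \<subseteq> S \<and> g = foldr (\<circ>) ws id"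
  obtain ws0 where "set ws0 \<subseteq> S" "g = wprod ws0" using affW_eq_wprod[OF g] by blast
  then have "?P (length ws0)" by (auto simp: wprod_def)
  then obtain ws where ws: "length ws = len \<Phi> (alcove p0) g" "set ws \<subseteq> S" "g = wprod ws"
    using LeastI_ex[of ?P] unfolding len_def wprod_def by blast
  have "length ws \<le> length ws'" if "set ws' \<subseteq> S" "wprod ws' = wprod ws" for ws'
  proof -
    have "?P (length ws')" using that ws(3) by (auto simp: wprod_def)
    then show ?thesis unfolding ws(1) len_def by (rule Least_le)
  qed
  then show ?thesis using shi_dist_reduced_word[OF ws(2)] ws by simp
qed

end

section \<open>Three parallel reflections\<close>

text \<open>The contribution of a pair of roots \<open>{\<beta>, -s\<^sub>\<alpha>\<beta>}\<close> to the length differences, written with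
  \<open>n = \<langle>\<beta>,\<alpha>\<^sup>\<or>\<rangle>\<close>, \<open>k = shi \<beta> a\<close>, \<open>m = shi \<beta> (r\<^sub>0 a)\<close>, \<open>e = shi \<beta> p0\<close>, \<open>es = shi (-s\<^sub>\<alpha>\<beta>) p0\<close>
  and \<open>ea = shi \<alpha> p0\<close> (see \<open>shi_reflections\<close> and \<open>partner_sign\<close> below).\<close>

lemma pair_gap_arith_low:
  fixes n c k m e es ea :: int
  assumes "e = 0 \<or> e = -1" "es = 0 \<or> es = -1" "ea = 0 \<or> ea = -1"
    and "0 \<le> n \<Longrightarrow> m \<le> k \<and> k \<le> m + n" "n \<le> 0 \<Longrightarrow> m + n \<le> k \<and> k \<le> m"
    and "n = 0 \<Longrightarrow> e \<noteq> es" "0 < n \<Longrightarrow> e = es \<Longrightarrow> e = ea" "n < 0 \<Longrightarrow> e = es \<Longrightarrow> e = -1 - ea"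
    and c: "c \<le> -2 \<or> (c = -1 \<and> ea = 0)"
  shows "\<bar>m+n-e\<bar> + \<bar>n*c+n-k-1-es\<bar> \<le> \<bar>k-e\<bar> + \<bar>n*c-m-1-es\<bar>"
proof -
  define P where "P = n * c"
  have "P = -n \<and> ea = 0 \<or> (0 \<le> n \<longrightarrow> P \<le> -2*n) \<and> (n \<le> 0 \<longrightarrow> -2*n \<le> P)"
    using c mult_left_mono[of c "-2" n] mult_left_mono_neg[of c "-2" n] by (auto simp: P_def)
  then show ?thesis unfolding P_def[symmetric] using assms(1-8) by (smt (verit))
qed

lemma pair_gap_arith_high:
  fixes n c k m e es ea :: int
  assumes "e = 0 \<or> e = -1" "es = 0 \<or> es = -1" "ea = 0 \<or> ea = -1"
    and "0 \<le> n \<Longrightarrow> m \<le> k \<and> k \<le> m + n" "n \<le> 0 \<Longrightarrow> m + n \<le> k \<and> k \<le> m"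
    and "n = 0 \<Longrightarrow> e \<noteq> es" "0 < n \<Longrightarrow> e = es \<Longrightarrow> e = ea" "n < 0 \<Longrightarrow> e = es \<Longrightarrow> e = -1 - ea"
    and c: "\<not> (c \<le> -2 \<or> (c = -1 \<and> ea = 0))"
  shows "\<bar>m+n-e\<bar> + \<bar>n*c+n-k-1-es\<bar> \<le> \<bar>k+n-e\<bar> + \<bar>n*c+n-m-1-es\<bar>"
    and "\<bar>m+n-e\<bar> + \<bar>n*c+n-k-1-es\<bar> = \<bar>k+n-e\<bar> + \<bar>n*c+n-m-1-es\<bar> \<Longrightarrow>
         \<bar>m-e\<bar> + \<bar>n*c-k-1-es\<bar> = \<bar>k-e\<bar> + \<bar>n*c-m-1-es\<bar>"
proof -
  define P where "P = n * c"
  have "c = -1 \<and> ea = -1 \<or> c = 0 \<or> 1 \<le> c" using c assms(3) by auto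
  then have "P = -n \<and> ea = -1 \<or> P = 0 \<or> (0 \<le> n \<longrightarrow> n \<le> P) \<and> (n \<le> 0 \<longrightarrow> P \<le> n)"
    using mult_left_mono[of 1 c n] mult_left_mono_neg[of 1 c n] by (auto simp: P_def)
  then show "\<bar>m+n-e\<bar> + \<bar>n*c+n-k-1-es\<bar> \<le> \<bar>k+n-e\<bar> + \<bar>n*c+n-m-1-es\<bar>"
    and "\<bar>m+n-e\<bar> + \<bar>n*c+n-k-1-es\<bar> = \<bar>k+n-e\<bar> + \<bar>n*c+n-m-1-es\<bar> \<Longrightarrow>
         \<bar>m-e\<bar> + \<bar>n*c-k-1-es\<bar> = \<bar>k-e\<bar> + \<bar>n*c-m-1-es\<bar>"
    unfolding P_def[symmetric] using assms(1-8) by (smt (verit))+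
qed

lemma floor_of_int_minus:
  fixes x :: real
  assumes "\<forall>j::int. x \<noteq> of_int j"
  shows "\<lfloor>of_int i - x\<rfloor> = i - \<lfloor>x\<rfloor> - 1"
proof -
  have "of_int \<lfloor>x\<rfloor> < x" using assms of_int_floor_le[of x] by (metis order_le_less)
  then show ?thesis using real_of_int_floor_add_one_gt[of x] unfolding floor_eq_iff by simp linarith
qed

context root_sys
begin

definition partner :: "pt \<Rightarrow> pt \<Rightarrow> pt" where
  "partner \<alpha> \<beta> = refl \<alpha> 0 (- \<beta>)"

lemma partner_eq: "\<alpha> \<noteq> 0 \<Longrightarrow> partner \<alpha> \<beta> = (\<beta> \<bullet> coroot \<alpha>) *\<^sub>R \<alpha> - \<beta>"
  by (simp add: partner_def refl_def coroot_def inner_commute)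

lemma partner_root: "\<alpha> \<in> \<Phi> \<Longrightarrow> \<beta> \<in> \<Phi> \<Longrightarrow> partner \<alpha> \<beta> \<in> \<Phi>"
  by (simp add: partner_def refl0_root_closed uminus_root)

lemma partner_partner: "\<alpha> \<in> \<Phi> \<Longrightarrow> partner \<alpha> (partner \<alpha> \<beta>) = \<beta>"
  by (simp add: partner_def refl0_uminus refl_refl root_nonzero)

lemma partner_root_self: "\<alpha> \<in> \<Phi> \<Longrightarrow> partner \<alpha> \<alpha> = \<alpha>" "\<alpha> \<in> \<Phi> \<Longrightarrow> partner \<alpha> (-\<alpha>) = -\<alpha>"
  by (simp_all add: partner_def refl0_uminus refl0_root_self root_nonzero)

lemma sum_partner: "\<alpha> \<in> \<Phi> \<Longrightarrow> (\<Sum>\<beta>\<in>\<Phi>. f (partner \<alpha> \<beta>)) = (\<Sum>\<beta>\<in>\<Phi>. f \<beta>)"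
  by (rule sum.reindex_bij_witness[of _ "partner \<alpha>" "partner \<alpha>"]) (auto simp: partner_partner partner_root)

end

context based_root_sys
begin

definition gap :: "pt \<Rightarrow> pt \<Rightarrow> int" where
  "gap v \<beta> = \<bar>shi \<beta> v - shi \<beta> p0\<bar>"

definition pair_gap :: "pt \<Rightarrow> pt \<Rightarrow> pt \<Rightarrow> int" where
  "pair_gap \<alpha> v \<beta> = gap v \<beta> + gap v (partner \<alpha> \<beta>)"

lemma gap_uminus: "v \<in> regular \<Phi> \<Longrightarrow> \<beta> \<in> \<Phi> \<Longrightarrow> gap v (-\<beta>) = gap v \<beta>"
  by (simp add: gap_def shi_uminus p0_regular abs_minus_commute)

lemma two_shi_dist_eq_sum_pair_gap:
  assumes "\<alpha> \<in> \<Phi>"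
  shows "2 * shi_dist p0 v = (\<Sum>\<beta>\<in>\<Phi>. pair_gap \<alpha> v \<beta>)"
proof -
  have "shi_dist p0 v = (\<Sum>\<beta>\<in>\<Phi>. gap v \<beta>)"
    by (simp add: shi_dist_def gap_def abs_minus_commute)
  then show ?thesis
    using sum_partner[OF assms, of "gap v"] by (simp add: pair_gap_def sum.distrib)
qed

lemma shi_dist_diff_eq:
  assumes \<alpha>: "\<alpha> \<in> \<Phi>" and "v \<in> regular \<Phi>" "w \<in> regular \<Phi>"
  shows "2 * (shi_dist p0 w - shi_dist p0 v) =
    4 * (gap w \<alpha> - gap v \<alpha>) + (\<Sum>\<beta>\<in>\<Phi> - {\<alpha>} - {-\<alpha>}. pair_gap \<alpha> w \<beta> - pair_gap \<alpha> v \<beta>)"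
proof -
  have "2 * (shi_dist p0 w - shi_dist p0 v) = (\<Sum>\<beta>\<in>\<Phi>. pair_gap \<alpha> w \<beta> - pair_gap \<alpha> v \<beta>)"
    using two_shi_dist_eq_sum_pair_gap[OF \<alpha>] by (simp add: sum_subtractf algebra_simps)
  also have "\<dots> = (pair_gap \<alpha> w \<alpha> - pair_gap \<alpha> v \<alpha>) + (pair_gap \<alpha> w (-\<alpha>) - pair_gap \<alpha> v (-\<alpha>))
      + (\<Sum>\<beta>\<in>\<Phi> - {\<alpha>} - {-\<alpha>}. pair_gap \<alpha> w \<beta> - pair_gap \<alpha> v \<beta>)"
    by (rule sum_roots_split[OF \<alpha>])
  finally show ?thesis
    using assms partner_root_self[OF \<alpha>] gap_uminus by (simp add: pair_gap_def)
qed

lemma shi_p0_cases: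
  assumes "0 \<in> closure (alcove p0)" "\<beta> \<in> \<Phi>"
  shows "shi \<beta> p0 = (if 0 < p0 \<bullet> \<beta> then 0 else -1)"
proof -
  have "shi \<beta> p0 \<le> 0" "shi (-\<beta>) p0 \<le> 0"
    using closure_alcove_shi_le[OF assms(1)] assms(2) uminus_root by fastforce+
  then show ?thesis
    using shi_uminus[OF p0_regular assms(2)] shi_strict[OF p0_regular assms(2)] by auto
qed

text \<open>Since \<open>p0 \<bullet> \<beta> + p0 \<bullet> (-s\<^sub>\<alpha>\<beta>) = n (p0 \<bullet> \<alpha>)\<close>, a root and its partner can lie on the same side
  of \<open>p0\<close> only if this is the side of \<open>n\<alpha>\<close>.\<close>

lemma partner_sign:
  assumes 0: "0 \<in> closure (alcove p0)" and \<alpha>: "\<alpha> \<in> \<Phi>" and \<beta>: "\<beta> \<in> \<Phi>"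
  defines "n \<equiv> \<lfloor>\<beta> \<bullet> coroot \<alpha>\<rfloor>"
  shows "n = 0 \<Longrightarrow> shi \<beta> p0 \<noteq> shi (partner \<alpha> \<beta>) p0"
    and "0 < n \<Longrightarrow> shi \<beta> p0 = shi (partner \<alpha> \<beta>) p0 \<Longrightarrow> shi \<beta> p0 = shi \<alpha> p0"
    and "n < 0 \<Longrightarrow> shi \<beta> p0 = shi (partner \<alpha> \<beta>) p0 \<Longrightarrow> shi \<beta> p0 = -1 - shi \<alpha> p0"
proof -
  let ?u = "p0 \<bullet> \<beta>" and ?v = "p0 \<bullet> partner \<alpha> \<beta>" and ?w = "p0 \<bullet> \<alpha>"
  have uvw: "?u + ?v = of_int n * ?w"
    using partner_eq[OF root_nonzero[OF \<alpha>]] cartan_of_int_floor[OF \<alpha> \<beta>]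
    by (simp add: n_def inner_diff_right del: of_int_floor_cancel)
  have nz: "?u \<noteq> 0" "?v \<noteq> 0" "?w \<noteq> 0"
    using p0_regular \<alpha> \<beta> partner_root[OF \<alpha> \<beta>] unfolding regular_iff by (metis of_int_0)+
  note shi_p0 = shi_p0_cases[OF 0 \<beta>] shi_p0_cases[OF 0 partner_root[OF \<alpha> \<beta>]] shi_p0_cases[OF 0 \<alpha>]
  show "n = 0 \<Longrightarrow> shi \<beta> p0 \<noteq> shi (partner \<alpha> \<beta>) p0"
    using uvw nz shi_p0 by auto
  have same_side: "0 < ?u \<longleftrightarrow> 0 < of_int n * ?w" if "shi \<beta> p0 = shi (partner \<alpha> \<beta>) p0"
  proof -
    have "0 < ?u \<longleftrightarrow> 0 < ?v" using that shi_p0 by (auto split: if_splits)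
    then show ?thesis using uvw nz by (cases "0 < ?u") linarith+
  qed
  show "shi \<beta> p0 = shi \<alpha> p0" if "0 < n" "shi \<beta> p0 = shi (partner \<alpha> \<beta>) p0"
    using same_side[OF that(2)] that(1) shi_p0 by (simp add: zero_less_mult_iff)
  show "shi \<beta> p0 = -1 - shi \<alpha> p0" if "n < 0" "shi \<beta> p0 = shi (partner \<alpha> \<beta>) p0"
    using same_side[OF that(2)] that(1) shi_p0 nz(3) by (simp add: zero_less_mult_iff)
qed

end

locale parallel_reflections = based_root_sys +
  fixes \<alpha> :: pt and c :: int and a :: pt
  assumes alpha_root: "\<alpha> \<in> \<Phi>" and a_regular: "a \<in> regular \<Phi>"
    and a_strip: "of_int c < a \<bullet> \<alpha>" "a \<bullet> \<alpha> < of_int c + 1"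
    and zero_in_closure: "0 \<in> closure (alcove p0)"
begin

abbreviation a0 :: pt where "a0 \<equiv> refl \<alpha> c a"
abbreviation a1 :: pt where "a1 \<equiv> refl \<alpha> (c + 1) a"
abbreviation a21 :: pt where "a21 \<equiv> refl \<alpha> (c + 2) (refl \<alpha> (c + 1) a)"
abbreviation cartan :: "pt \<Rightarrow> int" where "cartan \<beta> \<equiv> \<lfloor>\<beta> \<bullet> coroot \<alpha>\<rfloor>"

lemma reflections_regular: "a0 \<in> regular \<Phi>" "a1 \<in> regular \<Phi>" "a21 \<in> regular \<Phi>"
  using aff_sym_regular[OF aff_sym_refl[OF alpha_root]] a_regular by blast+

lemma inner_reflections:
  "a0 \<bullet> v = a \<bullet> v - (a \<bullet> \<alpha> - of_int c) * (coroot \<alpha> \<bullet> v)"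
  "a1 \<bullet> v = a0 \<bullet> v + coroot \<alpha> \<bullet> v"
  "a21 \<bullet> v = a \<bullet> v + coroot \<alpha> \<bullet> v"
proof -
  show a0: "a0 \<bullet> v = a \<bullet> v - (a \<bullet> \<alpha> - of_int c) * (coroot \<alpha> \<bullet> v)" for v
    by (simp add: refl_def inner_diff_left)
  show "a1 \<bullet> v = a0 \<bullet> v + coroot \<alpha> \<bullet> v"
    unfolding a0 by (simp add: refl_def inner_diff_left algebra_simps)
  have "a1 \<bullet> \<alpha> = 2 * of_int (c + 1) - a \<bullet> \<alpha>" using refl_inner_root[OF root_nonzero[OF alpha_root]] .
  then show "a21 \<bullet> v = a \<bullet> v + coroot \<alpha> \<bullet> v"
    by (simp add: refl_def [of \<alpha> "c + 2"] inner_diff_left) (simp add: refl_def inner_diff_left algebra_simps)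
qed

lemma shi_reflections:
  assumes \<beta>: "\<beta> \<in> \<Phi>"
  shows "shi \<beta> a1 = shi \<beta> a0 + cartan \<beta>" "shi \<beta> a21 = shi \<beta> a + cartan \<beta>"
    "shi (partner \<alpha> \<beta>) a0 = cartan \<beta> * c - shi \<beta> a - 1"
    "shi (partner \<alpha> \<beta>) a = cartan \<beta> * c - shi \<beta> a0 - 1"
    "shi (partner \<alpha> \<beta>) a1 = cartan \<beta> * c + cartan \<beta> - shi \<beta> a - 1"
    "shi (partner \<alpha> \<beta>) a21 = cartan \<beta> * c + cartan \<beta> - shi \<beta> a0 - 1"
proof -
  have n: "coroot \<alpha> \<bullet> \<beta> = of_int (cartan \<beta>)" "coroot \<alpha> \<bullet> \<alpha> = 2"
    using cartan_of_int_floor[OF alpha_root \<beta>] coroot_inner_root[OF root_nonzero[OF alpha_root]]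
    by (simp_all add: inner_commute del: of_int_floor_cancel)
  have partner: "v \<bullet> partner \<alpha> \<beta> = of_int (cartan \<beta>) * (v \<bullet> \<alpha>) - v \<bullet> \<beta>" for v
    using partner_eq[OF root_nonzero[OF alpha_root]] n(1) by (simp add: inner_diff_right inner_commute)
  let ?n = "of_int (cartan \<beta>) :: real"
  have \<alpha>: "a0 \<bullet> \<alpha> = 2 * of_int c - a \<bullet> \<alpha>" "a1 \<bullet> \<alpha> = 2 * of_int (c + 1) - a \<bullet> \<alpha>"
      "a21 \<bullet> \<alpha> = a \<bullet> \<alpha> + 2"
    using refl_inner_root[OF root_nonzero[OF alpha_root]] inner_reflections(3)[of \<alpha>] n(2) by simp_all
  have \<beta>': "a0 \<bullet> \<beta> = a \<bullet> \<beta> - (a \<bullet> \<alpha> - of_int c) * ?n" "a1 \<bullet> \<beta> = a0 \<bullet> \<beta> + ?n"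
      "a21 \<bullet> \<beta> = a \<bullet> \<beta> + ?n"
    using inner_reflections[of \<beta>] n(1) by simp_all
  have pa: "a0 \<bullet> partner \<alpha> \<beta> = of_int (cartan \<beta> * c) - a \<bullet> \<beta>"
    "a \<bullet> partner \<alpha> \<beta> = of_int (cartan \<beta> * c) - a0 \<bullet> \<beta>"
    "a1 \<bullet> partner \<alpha> \<beta> = of_int (cartan \<beta> * c + cartan \<beta>) - a \<bullet> \<beta>"
    "a21 \<bullet> partner \<alpha> \<beta> = of_int (cartan \<beta> * c + cartan \<beta>) - a0 \<bullet> \<beta>"
    unfolding partner \<alpha> \<beta>' by (simp_all add: algebra_simps)
  have "\<forall>j::int. a \<bullet> \<beta> \<noteq> of_int j" "\<forall>j::int. a0 \<bullet> \<beta> \<noteq> of_int j"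
    using a_regular reflections_regular(1) \<beta> by (simp_all add: regular_iff)
  note floor_a = floor_of_int_minus[OF this(1)] and floor_a0 = floor_of_int_minus[OF this(2)]
  show "shi \<beta> a1 = shi \<beta> a0 + cartan \<beta>" "shi \<beta> a21 = shi \<beta> a + cartan \<beta>"
    unfolding shi_def \<beta>'(2,3) by simp_all
  show "shi (partner \<alpha> \<beta>) a0 = cartan \<beta> * c - shi \<beta> a - 1"
    "shi (partner \<alpha> \<beta>) a = cartan \<beta> * c - shi \<beta> a0 - 1"
    "shi (partner \<alpha> \<beta>) a1 = cartan \<beta> * c + cartan \<beta> - shi \<beta> a - 1"
    "shi (partner \<alpha> \<beta>) a21 = cartan \<beta> * c + cartan \<beta> - shi \<beta> a0 - 1"
    unfolding shi_def pa floor_a floor_a0 by simp_all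
qed

end

context parallel_reflections
begin

lemma shi_p0_range: "\<beta> \<in> \<Phi> \<Longrightarrow> shi \<beta> p0 = 0 \<or> shi \<beta> p0 = -1"
  using shi_p0_cases[OF zero_in_closure] by simp

lemma shi_a_between:
  assumes "\<beta> \<in> \<Phi>"
  shows "0 \<le> cartan \<beta> \<Longrightarrow> shi \<beta> a0 \<le> shi \<beta> a \<and> shi \<beta> a \<le> shi \<beta> a0 + cartan \<beta>"
    and "cartan \<beta> \<le> 0 \<Longrightarrow> shi \<beta> a0 + cartan \<beta> \<le> shi \<beta> a \<and> shi \<beta> a \<le> shi \<beta> a0"
proof -
  let ?n = "of_int (cartan \<beta>) :: real" and ?\<theta> = "a \<bullet> \<alpha> - of_int c"
  have a0: "a0 \<bullet> \<beta> = a \<bullet> \<beta> - ?\<theta> * ?n"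
    using inner_reflections(1)[of \<beta>] cartan_of_int_floor[OF alpha_root assms]
    by (simp add: inner_commute del: of_int_floor_cancel)
  have \<theta>: "0 < ?\<theta>" "?\<theta> < 1" using a_strip by simp_all
  show "shi \<beta> a0 \<le> shi \<beta> a \<and> shi \<beta> a \<le> shi \<beta> a0 + cartan \<beta>" if "0 \<le> cartan \<beta>"
  proof -
    have "0 \<le> ?\<theta> * ?n" "?\<theta> * ?n \<le> ?n" using \<theta> that by (simp_all add: mult_left_le_one_le)
    then have "a0 \<bullet> \<beta> \<le> a \<bullet> \<beta>" "a \<bullet> \<beta> \<le> a0 \<bullet> \<beta> + ?n" using a0 by simp_all
    then have "\<lfloor>a0 \<bullet> \<beta>\<rfloor> \<le> \<lfloor>a \<bullet> \<beta>\<rfloor>" "\<lfloor>a \<bullet> \<beta>\<rfloor> \<le> \<lfloor>a0 \<bullet> \<beta> + ?n\<rfloor>"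
      using floor_mono by blast+
    then show ?thesis unfolding shi_def by simp
  qed
  show "shi \<beta> a0 + cartan \<beta> \<le> shi \<beta> a \<and> shi \<beta> a \<le> shi \<beta> a0" if "cartan \<beta> \<le> 0"
  proof -
    have "?\<theta> * ?n \<le> 0" using \<theta> that by (simp add: mult_nonneg_nonpos)
    moreover have "1 * ?n \<le> ?\<theta> * ?n" using \<theta> that by (intro mult_right_mono_neg) simp_all
    ultimately have "a \<bullet> \<beta> \<le> a0 \<bullet> \<beta>" "a0 \<bullet> \<beta> + ?n \<le> a \<bullet> \<beta>" using a0 by simp_all
    then have "\<lfloor>a \<bullet> \<beta>\<rfloor> \<le> \<lfloor>a0 \<bullet> \<beta>\<rfloor>" "\<lfloor>a0 \<bullet> \<beta> + ?n\<rfloor> \<le> \<lfloor>a \<bullet> \<beta>\<rfloor>"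
      using floor_mono by blast+
    then show ?thesis unfolding shi_def by simp
  qed
qed

lemma pair_gap_a1_le:
  assumes low: "c \<le> -2 \<or> (c = -1 \<and> shi \<alpha> p0 = 0)" and \<beta>: "\<beta> \<in> \<Phi>"
  shows "pair_gap \<alpha> a1 \<beta> \<le> pair_gap \<alpha> a \<beta>"
  unfolding pair_gap_def gap_def shi_reflections[OF \<beta>]
  by (rule pair_gap_arith_low)
    (fact shi_p0_range[OF \<beta>] shi_p0_range[OF partner_root[OF alpha_root \<beta>]] shi_p0_range[OF alpha_root]
      shi_a_between[OF \<beta>] partner_sign[OF zero_in_closure alpha_root \<beta>] low)+

lemma pair_gap_a21_ge:
  assumes high: "\<not> (c \<le> -2 \<or> (c = -1 \<and> shi \<alpha> p0 = 0))" and \<beta>: "\<beta> \<in> \<Phi>"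
  shows "pair_gap \<alpha> a1 \<beta> \<le> pair_gap \<alpha> a21 \<beta>"
    and "pair_gap \<alpha> a1 \<beta> = pair_gap \<alpha> a21 \<beta> \<Longrightarrow> pair_gap \<alpha> a0 \<beta> = pair_gap \<alpha> a \<beta>"
proof -
  note hyps = shi_p0_range[OF \<beta>] shi_p0_range[OF partner_root[OF alpha_root \<beta>]] shi_p0_range[OF alpha_root]
    shi_a_between[OF \<beta>] partner_sign[OF zero_in_closure alpha_root \<beta>] high
  note unfold = pair_gap_def gap_def shi_reflections[OF \<beta>]
  show "pair_gap \<alpha> a1 \<beta> \<le> pair_gap \<alpha> a21 \<beta>"
    unfolding unfold by (rule pair_gap_arith_high(1)) (fact hyps)+
  assume "pair_gap \<alpha> a1 \<beta> = pair_gap \<alpha> a21 \<beta>"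
  note eq = this[unfolded unfold]
  show "pair_gap \<alpha> a0 \<beta> = pair_gap \<alpha> a \<beta>"
    unfolding unfold by (rule pair_gap_arith_high(2)) (fact hyps eq)+
qed

lemma gap_at_alpha:
  "gap a0 \<alpha> = \<bar>c - 1 - shi \<alpha> p0\<bar>" "gap a \<alpha> = \<bar>c - shi \<alpha> p0\<bar>"
  "gap a1 \<alpha> = \<bar>c + 1 - shi \<alpha> p0\<bar>" "gap a21 \<alpha> = \<bar>c + 2 - shi \<alpha> p0\<bar>"
proof -
  have "a0 \<bullet> \<alpha> = 2 * of_int c - a \<bullet> \<alpha>" "a1 \<bullet> \<alpha> = 2 * of_int (c + 1) - a \<bullet> \<alpha>"
    "a21 \<bullet> \<alpha> = a \<bullet> \<alpha> + 2"
    using refl_inner_root[OF root_nonzero[OF alpha_root]] inner_reflections(3)[of \<alpha>]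
      coroot_inner_root[OF root_nonzero[OF alpha_root]] by (simp_all add: inner_commute)
  then have "shi \<alpha> a0 = c - 1" "shi \<alpha> a = c" "shi \<alpha> a1 = c + 1" "shi \<alpha> a21 = c + 2"
    using a_strip unfolding shi_def floor_eq_iff by simp_all
  then show "gap a0 \<alpha> = \<bar>c - 1 - shi \<alpha> p0\<bar>" "gap a \<alpha> = \<bar>c - shi \<alpha> p0\<bar>"
    "gap a1 \<alpha> = \<bar>c + 1 - shi \<alpha> p0\<bar>" "gap a21 \<alpha> = \<bar>c + 2 - shi \<alpha> p0\<bar>"
    by (simp_all add: gap_def)
qed

lemma shi_dist_r0_change:
  assumes h21: "shi_dist p0 a21 = shi_dist p0 a1 + 2" and h1: "shi_dist p0 a1 = shi_dist p0 a + 2"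
  shows "shi_dist p0 a0 = shi_dist p0 a + 2 \<or> shi_dist p0 a0 + 2 = shi_dist p0 a"
proof -
  let ?ea = "shi \<alpha> p0" and ?R = "\<Phi> - {\<alpha>} - {-\<alpha>}"
  have high: "\<not> (c \<le> -2 \<or> (c = -1 \<and> ?ea = 0))"
  proof
    assume "c \<le> -2 \<or> (c = -1 \<and> ?ea = 0)"
    then have "(\<Sum>\<beta>\<in>\<Phi>. pair_gap \<alpha> a1 \<beta>) \<le> (\<Sum>\<beta>\<in>\<Phi>. pair_gap \<alpha> a \<beta>)"
      using pair_gap_a1_le by (intro sum_mono)
    then show False
      using h1 two_shi_dist_eq_sum_pair_gap[OF alpha_root, of a1] two_shi_dist_eq_sum_pair_gap[OF alpha_root, of a]
      by linarith
  qed
  txt \<open>The pair \<open>{\<alpha>, -\<alpha>}\<close> alone accounts for \<open>h21\<close>; all other pairs contribute nonnegatively, hence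
    nothing.\<close>
  then have "gap a21 \<alpha> - gap a1 \<alpha> = 1" using shi_p0_range[OF alpha_root] by (auto simp: gap_at_alpha)
  then have "(\<Sum>\<beta>\<in>?R. pair_gap \<alpha> a21 \<beta> - pair_gap \<alpha> a1 \<beta>) = 0"
    using shi_dist_diff_eq[OF alpha_root reflections_regular(2,3)] h21 by simp
  moreover have "\<forall>\<beta>\<in>?R. 0 \<le> pair_gap \<alpha> a21 \<beta> - pair_gap \<alpha> a1 \<beta>"
    using pair_gap_a21_ge(1)[OF high] by simp
  ultimately have "\<forall>\<beta>\<in>?R. pair_gap \<alpha> a21 \<beta> - pair_gap \<alpha> a1 \<beta> = 0"
    using sum_nonneg_eq_0_iff[of ?R "\<lambda>\<beta>. pair_gap \<alpha> a21 \<beta> - pair_gap \<alpha> a1 \<beta>"] finite_roots by simp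
  then have "\<forall>\<beta>\<in>?R. pair_gap \<alpha> a \<beta> - pair_gap \<alpha> a0 \<beta> = 0"
    using pair_gap_a21_ge(2)[OF high] by simp
  then have "2 * (shi_dist p0 a - shi_dist p0 a0) = 4 * (\<bar>c - ?ea\<bar> - \<bar>c - 1 - ?ea\<bar>)"
    using shi_dist_diff_eq[OF alpha_root reflections_regular(1) a_regular] by (simp add: gap_at_alpha)
  moreover have "\<bar>c - ?ea\<bar> - \<bar>c - 1 - ?ea\<bar> = 1 \<or> \<bar>c - ?ea\<bar> - \<bar>c - 1 - ?ea\<bar> = -1" by arith
  ultimately show ?thesis by auto
qed

end

theorem theorem1p3:
  fixes \<Phi> A0 :: "pt set" and \<alpha> :: pt and c :: int and x :: "pt \<Rightarrow> pt"
  assumes "root_system \<Phi>"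
    and "is_alcove \<Phi> A0" and "0 \<in> closure A0"
    and "\<alpha> \<in> \<Phi>"
    and "x \<in> affW \<Phi>"
    and "x ` A0 \<subseteq> {v. of_int c \<le> v \<bullet> \<alpha> \<and> v \<bullet> \<alpha> \<le> of_int c + 1}"
    and "len \<Phi> A0 (refl \<alpha> (c + 2) \<circ> refl \<alpha> (c + 1) \<circ> x) = len \<Phi> A0 (refl \<alpha> (c + 1) \<circ> x) + 1"
    and "len \<Phi> A0 (refl \<alpha> (c + 1) \<circ> x) = len \<Phi> A0 x + 1"
  shows "len \<Phi> A0 (refl \<alpha> c \<circ> x) = len \<Phi> A0 x + 1 \<or> len \<Phi> A0 (refl \<alpha> c \<circ> x) + 1 = len \<Phi> A0 x"
proof -
  interpret root_sys \<Phi> by unfold_locales fact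
  obtain p where p: "p \<in> regular \<Phi>" and A0: "A0 = alcove p"
    using assms(2) connected_component_regular_eq_alcove unfolding is_alcove_def by metis
  have xp: "x p \<in> regular \<Phi>" using affW_regular[OF assms(5) p] .
  moreover have "x p \<in> x ` A0" using alcove_self[OF p] A0 by simp
  ultimately have "of_int c < x p \<bullet> \<alpha>" "x p \<bullet> \<alpha> < of_int c + 1"
    using regular_strict_strip[OF xp assms(4)] assms(6) by auto
  with assms(1,3,4) A0 p xp interpret parallel_reflections \<Phi> p \<alpha> c "x p"
    by unfold_locales simp_all
  have len: "2 * int (len \<Phi> A0 g) = shi_dist p (g p)" if "g \<in> affW \<Phi>" for g
    using len_eq_shi_dist[OF that] A0 by simp
  have "refl \<alpha> j \<in> affW \<Phi>" for j using refls_affW assms(4) by (auto simp: refls_def)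
  then have L: "2 * int (len \<Phi> A0 x) = shi_dist p (x p)"
    "2 * int (len \<Phi> A0 (refl \<alpha> c \<circ> x)) = shi_dist p a0"
    "2 * int (len \<Phi> A0 (refl \<alpha> (c + 1) \<circ> x)) = shi_dist p a1"
    "2 * int (len \<Phi> A0 (refl \<alpha> (c + 2) \<circ> refl \<alpha> (c + 1) \<circ> x)) = shi_dist p a21"
    using len assms(5) affW_comp by simp_all
  then have "shi_dist p a21 = shi_dist p a1 + 2" "shi_dist p a1 = shi_dist p (x p) + 2"
    using assms(7,8) by simp_all
  then have "shi_dist p a0 = shi_dist p (x p) + 2 \<or> shi_dist p a0 + 2 = shi_dist p (x p)"
    by (rule shi_dist_r0_change)
  then show ?thesis using L(1,2) by linarith
qed

end
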